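(* Let $n\ge 2$, let $(a_{rq})_{1\le r,q\le n}$ be a real (not necessarily symmetric) matrix, and let $f:\mathbb{R}^n\to\mathbb{R}$, $f(x_1,\dots,x_n)=\sum_{r,q=1}^n a_{rq}\,x_r x_q^2$. Let $M=\mathrm{graph}(f)\subset\mathbb{R}^{n+1}$ with the induced metric $g$, and let $g(t)$, $t\in[0,T)$, be a smooth family of metrics on a neighborhood of $p$ (the origin) in $M$ solving the Ricci flow $\partial_t g=-2\,\mathrm{Ric}(g)$ with $g(0)=g$. Then $Rm(0,p)=0$, and in the global coordinates $x$ the time derivatives $\partial_t R_{ijkl}(0,p)$, for $i<j$, $k<l$, $i\le k$, are: (i) $0$ if $i,j,k,l$ are mutually distinct; (ii) $8(a_{il}a_{lj}+a_{li}a_{ij})-8a_{ij}a_{lj}$ if $i<k=j<l$; (iii) $8a_{ij}a_{kj}-8(a_{ik}a_{kj}+a_{ki}a_{ij})$ if $i<k<l=j$; (iv) $8a_{li}a_{ji}-8(a_{jl}a_{li}+a_{lj}a_{ji})$ if $i=k$, $j\ne l$; (v) $8(a_{ij}^2+a_{ji}^2)-8\big(\sum_{q\ne i,j}a_{qi}a_{qj}+3a_{ii}a_{ij}+3a_{jj}a_{ji}\big)$ if $i=k$, $j=l$. (All other components are determined from these by the symmetries of the curvature tensor.) In particular, if $a_{\alpha\beta}a_{\beta\gamma}+a_{\beta\alpha}a_{\alpha\gamma}=a_{\alpha\gamma}a_{\beta\gamma}$ for all mutually distinct $\alpha,\beta,\gamma$, then $\partial_t R_{ijkl}(0,p)=0$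 whenever $\{i,j\}\neq\{k,l\}$. *)

theory Defs
  imports "HOL-Analysis.Analysis"
begin

definition dir_deriv :: "'a::real_normed_vector \<Rightarrow> ('a \<Rightarrow> real) \<Rightarrow> 'a \<Rightarrow> real" where
  "dir_deriv v F z = deriv (\<lambda>s. F (z + s *\<^sub>R v)) 0"

fun dir_derivs :: "'a::real_normed_vector list \<Rightarrow> ('a \<Rightarrow> real) \<Rightarrow> 'a \<Rightarrow> real" where
  "dir_derivs [] F = F"
| "dir_derivs (v # vs) F = dir_deriv v (dir_derivs vs F)"

definition smooth_fun_on :: "'a::real_normed_vector set \<Rightarrow> ('a \<Rightarrow> real) \<Rightarrow> bool" where
  "smooth_fun_on S F \<longleftrightarrow> open S \<and>
     (\<forall>vs. continuous_on S (dir_derivs vs F) \<and>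
        (\<forall>v. \<forall>z\<in>S. (\<lambda>s. dir_derivs vs F (z + s *\<^sub>R v)) differentiable (at 0)))"

type_synonym 'n metric_family = "real \<Rightarrow> real^'n \<Rightarrow> real^'n^'n"

definition pdx :: "'n::finite \<Rightarrow> (real^'n \<Rightarrow> real) \<Rightarrow> real^'n \<Rightarrow> real" where
  "pdx k F x = deriv (\<lambda>s. F (x + s *\<^sub>R axis k 1)) 0"

definition Christoffel :: "'n::finite metric_family \<Rightarrow> real \<Rightarrow> real^'n \<Rightarrow> 'n \<Rightarrow> 'n \<Rightarrow> 'n \<Rightarrow> real" where
  "Christoffel g t x i j m =
     (1/2) * (\<Sum>l\<in>UNIV. matrix_inv (g t x) $ m $ l *
        (pdx i (\<lambda>y. g t y $ j $ l) x + pdx j (\<lambda>y. g t y $ i $ l) x - pdx l (\<lambda>y. g t y $ i $ j) x))"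

text \<open>R(d_i,d_j)d_k = R_ijk^m d_m with R(X,Y)Z = nabla_X nabla_Y Z - nabla_Y nabla_X Z - nabla_[X,Y] Z.\<close>
definition Riem31 :: "'n::finite metric_family \<Rightarrow> real \<Rightarrow> real^'n \<Rightarrow> 'n \<Rightarrow> 'n \<Rightarrow> 'n \<Rightarrow> 'n \<Rightarrow> real" where
  "Riem31 g t x i j k m =
     pdx i (\<lambda>y. Christoffel g t y j k m) x - pdx j (\<lambda>y. Christoffel g t y i k m) x
     + (\<Sum>p\<in>UNIV. Christoffel g t x j k p * Christoffel g t x i p m
                 - Christoffel g t x i k p * Christoffel g t x j p m)"

text \<open>R_ijkl = g(R(d_i,d_j)d_k, d_l); with this convention R_ijji is the sectional curvature.\<close>
definition Rm :: "'n::finite metric_family \<Rightarrow> real \<Rightarrow> real^'n \<Rightarrow> 'n \<Rightarrow> 'n \<Rightarrow> 'n \<Rightarrow> 'n \<Rightarrow> real" where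
  "Rm g t x i j k l = (\<Sum>m\<in>UNIV. Riem31 g t x i j k m * g t x $ m $ l)"

definition Ric :: "'n::finite metric_family \<Rightarrow> real \<Rightarrow> real^'n \<Rightarrow> 'n \<Rightarrow> 'n \<Rightarrow> real" where
  "Ric g t x j k = (\<Sum>i\<in>UNIV. Riem31 g t x i j k i)"

definition cubic_f :: "('n::finite \<Rightarrow> 'n \<Rightarrow> real) \<Rightarrow> real^'n \<Rightarrow> real" where
  "cubic_f a x = (\<Sum>r\<in>UNIV. \<Sum>q\<in>UNIV. a r q * x $ r * (x $ q)^2)"

text \<open>Induced (pull-back of Euclidean) metric of graph(f) in the graph coordinates x:
  g_ij = delta_ij + d_i f * d_j f.\<close>
definition graph_metric :: "(real^'n \<Rightarrow> real) \<Rightarrow> real^'n \<Rightarrow> real^'n^'n::finite" where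
  "graph_metric f x = (\<chi> i j. (if i = j then 1 else 0) + pdx i f x * pdx j f x)"

end

theory Submission
  imports Defs
begin

text \<open>
  In graph coordinates \<open>g(0) = I + P\<close> with \<open>P\<^sub>i\<^sub>j = \<partial>\<^sub>if \<partial>\<^sub>jf\<close>. The gradient of \<open>f\<close>
  vanishes to order 2 at 0, so \<open>P\<close> vanishes to order 4 and the Christoffel symbols to order 3:
  the curvature vanishes at 0, and the second derivatives of Ricci at 0 only involve the
  fourth derivatives of \<open>P\<close>, i.e. products of the third derivatives \<open>f3\<close> of \<open>f\<close>. Differentiating
  \<open>R = \<partial>\<Gamma> - \<partial>\<Gamma> + \<Gamma>\<Gamma>\<close> in time at the origin, every term except the ones with
  \<open>\<partial>\<^sub>x\<partial>\<^sub>x\<partial>\<^sub>t g = -2 \<partial>\<^sub>x\<partial>\<^sub>x Ric\<close> vanishes, which gives an explicit formula \<open>dRm\<close> in terms of the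
  \<open>f3\<close>; the theorem is its case-by-case evaluation.
\<close>

lemma dir_deriv_eqI:
  assumes "((\<lambda>s. H (z + s *\<^sub>R v)) has_real_derivative D) (at 0)"
  shows "dir_deriv v H z = D"
  unfolding dir_deriv_def using DERIV_imp_deriv assms by blast

lemma line_deriv_shift:
  fixes z v :: "'a::real_normed_vector"
  assumes "((\<lambda>s. H (z + s0 *\<^sub>R v + s *\<^sub>R v)) has_real_derivative D) (at 0)"
  shows "((\<lambda>s. H (z + s *\<^sub>R v)) has_real_derivative D) (at s0)"
proof -
  have "((\<lambda>s. H (z + s *\<^sub>R v)) has_real_derivative D) (at (0 + s0))"
    unfolding DERIV_shift
    using assms by (simp add: scaleR_add_left add.assoc add.commute add.left_commute)
  then show ?thesis by simp
qed

lemma eventually_line_in_open: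
  fixes z v :: "'a::real_normed_vector"
  assumes "open S" "z \<in> S"
  shows "eventually (\<lambda>s. z + s *\<^sub>R v \<in> S) (nhds (0::real))"
proof -
  have "continuous_on UNIV (\<lambda>s::real. z + s *\<^sub>R v)"
    by (intro continuous_intros)
  then have "open ((\<lambda>s::real. z + s *\<^sub>R v) -` S)"
    using assms(1) open_vimage by blast
  moreover have "0 \<in> (\<lambda>s::real. z + s *\<^sub>R v) -` S" using assms(2) by simp
  ultimately show ?thesis
    unfolding eventually_nhds by blast
qed

lemma dir_deriv_cong_open:
  fixes z v :: "'a::real_normed_vector"
  assumes "open S" "z \<in> S" "\<And>x. x \<in> S \<Longrightarrow> H x = K x"
  shows "dir_deriv v H z = dir_deriv v K z"
proof -
  have "eventually (\<lambda>s. H (z + s *\<^sub>R v) = K (z + s *\<^sub>R v)) (nhds (0::real))"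
    using eventually_line_in_open[OF assms(1,2), of v]
    by eventually_elim (use assms(3) in auto)
  then show ?thesis unfolding dir_deriv_def by (rule deriv_cong_ev) simp
qed

lemma line_deriv_cong_open:
  fixes z v :: "'a::real_normed_vector"
  assumes "open S" "z \<in> S" "\<And>x. x \<in> S \<Longrightarrow> H x = K x"
    and "((\<lambda>s. K (z + s *\<^sub>R v)) has_real_derivative D) (at 0)"
  shows "((\<lambda>s. H (z + s *\<^sub>R v)) has_real_derivative D) (at 0)"
proof -
  have "eventually (\<lambda>s. H (z + s *\<^sub>R v) = K (z + s *\<^sub>R v)) (nhds (0::real))"
    using eventually_line_in_open[OF assms(1,2), of v]
    by eventually_elim (use assms(3) in auto)
  then show ?thesis using assms(4) by (subst DERIV_cong_ev) auto
qed

lemma small_parallelogram: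
  fixes z u v :: "'a::real_normed_vector"
  assumes d: "d > 0"
  obtains h where "h > 0"
    "\<And>a b x y. 0 \<le> a \<Longrightarrow> a \<le> h \<Longrightarrow> 0 \<le> b \<Longrightarrow> b \<le> h \<Longrightarrow> {x, y} = {u, v} \<Longrightarrow>
       dist (z + a *\<^sub>R x + b *\<^sub>R y) z < d"
proof
  define h where "h = d / (2 * (norm u + norm v + 1))"
  have den: "2 * (norm u + norm v + 1) > 0" by (smt (verit) norm_ge_zero)
  show h: "h > 0" unfolding h_def using d den by simp
  fix a b x y
  assume ab: "0 \<le> a" "a \<le> h" "0 \<le> b" "b \<le> h" and xy: "{x, y} = {u, v}"
  have "norm (a *\<^sub>R x + b *\<^sub>R y) \<le> a * norm x + b * norm y"
    using ab norm_triangle_ineq[of "a *\<^sub>R x" "b *\<^sub>R y"] by simp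
  also have "\<dots> \<le> h * norm x + h * norm y"
    using ab by (intro add_mono mult_right_mono) auto
  also have "\<dots> < h * (2 * (norm u + norm v + 1))"
    using h xy by (auto simp: doubleton_eq_iff algebra_simps intro!: add_nonneg_pos)
  also have "\<dots> = d" unfolding h_def using den by simp
  finally show "dist (z + a *\<^sub>R x + b *\<^sub>R y) z < d" by (simp add: dist_norm add.assoc)
qed

text \<open>Iterated derivatives: the last direction in the list is applied first.\<close>

lemma dir_derivs_append: "dir_derivs (vs @ [v]) H = dir_derivs vs (dir_deriv v H)"
  by (induction vs) auto

lemma dir_deriv_slice: "dir_deriv (0, w) H (t, y) = dir_deriv w (\<lambda>y. H (t, y)) y"
  by (simp add: dir_deriv_def)

lemma sum_delta_mult: "(\<Sum>r\<in>UNIV. (if p = r then 1 else 0) * f r) = (f (p::'a::finite) :: real)"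
proof -
  have "(\<Sum>r\<in>UNIV. (if p = r then 1 else 0) * f r) = (\<Sum>r\<in>UNIV. if p = r then f r else 0)"
    by (rule sum.cong) auto
  also have "\<dots> = f p" by (simp add: sum.delta)
  finally show ?thesis .
qed

lemma sum_mult_delta: "(\<Sum>r\<in>UNIV. f r * (if r = p then 1 else 0)) = (f (p::'a::finite) :: real)"
proof -
  have "(\<Sum>r\<in>UNIV. f r * (if r = p then 1 else 0)) = (\<Sum>r\<in>UNIV. if r = p then f r else 0)"
    by (rule sum.cong) auto
  also have "\<dots> = f p" by (simp add: sum.delta')
  finally show ?thesis .
qed

lemma deriv_within_unique:
  fixes f :: "real \<Rightarrow> real"
  assumes "(f has_real_derivative D) (at 0)" "(f has_real_derivative E) (at 0 within {0..<T})" "T > 0"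
  shows "D = E"
proof -
  have "(0::real) islimpt {0..<T}"
    using islimpt_greaterThanLessThan1[OF assms(3)] by (rule islimpt_subset) auto
  then have "at 0 within {0..<T} \<noteq> bot"
    by (simp add: trivial_limit_within)
  then show ?thesis
    using has_field_derivative_unique has_field_derivative_at_within[OF assms(1)] assms(2) by blast
qed

section \<open>Polynomial algebras over a base set of functions\<close>

inductive_set polys :: "('a \<Rightarrow> real) set \<Rightarrow> ('a \<Rightarrow> real) set" for B where
  pbase: "b \<in> B \<Longrightarrow> b \<in> polys B"
| pconst: "(\<lambda>z. c) \<in> polys B"
| padd: "p \<in> polys B \<Longrightarrow> q \<in> polys B \<Longrightarrow> (\<lambda>z. p z + q z) \<in> polys B"
| pmult: "p \<in> polys B \<Longrightarrow> q \<in> polys B \<Longrightarrow> (\<lambda>z. p z * q z) \<in> polys B"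

lemma polys_mono: "p \<in> polys B \<Longrightarrow> B \<subseteq> C \<Longrightarrow> p \<in> polys C"
  by (induction rule: polys.induct) (auto intro: polys.pbase polys.pconst polys.padd polys.pmult)

lemma polys_sum: "finite A \<Longrightarrow> (\<And>i. i \<in> A \<Longrightarrow> f i \<in> polys B) \<Longrightarrow> (\<lambda>z. \<Sum>i\<in>A. f i z) \<in> polys B"
proof (induction A rule: finite_induct)
  case empty then show ?case using pconst[of 0 B] by simp
next
  case (insert x F)
  then show ?case by (simp add: padd)
qed

lemma polys_prod: "finite A \<Longrightarrow> (\<And>i. i \<in> A \<Longrightarrow> f i \<in> polys B) \<Longrightarrow> (\<lambda>z. \<Prod>i\<in>A. f i z) \<in> polys B"
proof (induction A rule: finite_induct)
  case empty then show ?case using pconst[of 1 B] by simp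
next
  case (insert x F)
  then show ?case by (simp add: pmult)
qed

definition poly_line_derivs :: "('a::real_normed_vector \<Rightarrow> real) set \<Rightarrow> 'a set \<Rightarrow> ('a \<Rightarrow> real) \<Rightarrow> bool" where
  "poly_line_derivs B S p \<longleftrightarrow>
     (\<forall>v. \<exists>q\<in>polys B. \<forall>z\<in>S. ((\<lambda>s. p (z + s *\<^sub>R v)) has_real_derivative q z) (at 0))"

lemma poly_line_derivs_mono: "poly_line_derivs B S p \<Longrightarrow> B \<subseteq> C \<Longrightarrow> poly_line_derivs C S p"
  unfolding poly_line_derivs_def using polys_mono by meson

definition closed_base :: "('a::real_normed_vector \<Rightarrow> real) set \<Rightarrow> 'a set \<Rightarrow> bool" where
  "closed_base B S \<longleftrightarrow> (\<forall>b\<in>B. continuous_on S b \<and> poly_line_derivs B S b)"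

lemma polys_continuous:
  assumes "closed_base B S" and "p \<in> polys B"
  shows "continuous_on S p"
  using assms(2) by induction (use assms(1) in \<open>auto simp: closed_base_def intro!: continuous_intros\<close>)

lemma polys_line_derivs:
  assumes cb: "closed_base B S" and p: "p \<in> polys B"
  shows "poly_line_derivs B S p"
  using p unfolding poly_line_derivs_def
proof (induction rule: polys.induct)
  case (pbase b)
  then show ?case using cb unfolding closed_base_def poly_line_derivs_def by blast
next
  case (pconst c)
  show ?case by (intro allI bexI[of _ "\<lambda>z. 0"] polys.pconst) auto
next
  case (padd p q)
  show ?case
  proof
    fix v
    obtain p' q' where "p' \<in> polys B" "q' \<in> polys B"
      and "\<forall>z\<in>S. ((\<lambda>s. p (z + s *\<^sub>R v)) has_real_derivative p' z) (at 0)"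
      and "\<forall>z\<in>S. ((\<lambda>s. q (z + s *\<^sub>R v)) has_real_derivative q' z) (at 0)"
      using padd.IH by meson
    then show "\<exists>r\<in>polys B. \<forall>z\<in>S. ((\<lambda>s. p (z + s *\<^sub>R v) + q (z + s *\<^sub>R v)) has_real_derivative r z) (at 0)"
      by (intro bexI[of _ "\<lambda>z. p' z + q' z"] polys.padd ballI DERIV_add) auto
  qed
next
  case (pmult p q)
  show ?case
  proof
    fix v
    obtain p' q' where "p' \<in> polys B" "q' \<in> polys B"
      and "\<forall>z\<in>S. ((\<lambda>s. p (z + s *\<^sub>R v)) has_real_derivative p' z) (at 0)"
      and "\<forall>z\<in>S. ((\<lambda>s. q (z + s *\<^sub>R v)) has_real_derivative q' z) (at 0)"
      using pmult.IH by meson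
    then show "\<exists>r\<in>polys B. \<forall>z\<in>S. ((\<lambda>s. p (z + s *\<^sub>R v) * q (z + s *\<^sub>R v)) has_real_derivative r z) (at 0)"
      using pmult.hyps
      by (intro bexI[of _ "\<lambda>z. p' z * q z + p z * q' z"] polys.padd polys.pmult ballI)
        (auto intro!: DERIV_mult[THEN DERIV_cong] simp: mult.commute)
  qed
qed

lemma reciprocal_line_derivs:
  assumes cb: "closed_base B S" and p: "p \<in> polys B" and nz: "\<And>z. z \<in> S \<Longrightarrow> p z \<noteq> 0"
  shows "poly_line_derivs (insert (\<lambda>z. 1 / p z) B) S (\<lambda>z. 1 / p z)"
  unfolding poly_line_derivs_def
proof
  fix v
  let ?C = "insert (\<lambda>z. 1 / p z) B"
  obtain p' where p': "p' \<in> polys B" "\<And>z. z \<in> S \<Longrightarrow> ((\<lambda>s. p (z + s *\<^sub>R v)) has_real_derivative p' z) (at 0)"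
    using polys_line_derivs[OF cb p] unfolding poly_line_derivs_def by blast
  have "((\<lambda>s. 1 / p (z + s *\<^sub>R v)) has_real_derivative (- 1) * p' z * (1 / p z) * (1 / p z)) (at 0)"
    if z: "z \<in> S" for z
  proof -
    have "((\<lambda>s. inverse (p (z + s *\<^sub>R v))) has_real_derivative
        - (p' z * inverse (p (z + 0 *\<^sub>R v) ^ Suc (Suc 0)))) (at 0)"
      by (rule DERIV_inverse_fun) (use p'(2)[OF z] nz[OF z] in simp_all)
    moreover have "- (p' z * inverse (p (z + 0 *\<^sub>R v) ^ Suc (Suc 0))) = (- 1) * p' z * (1 / p z) * (1 / p z)"
      by (simp add: power2_eq_square divide_inverse)
    ultimately show ?thesis by (simp add: divide_inverse mult.assoc)
  qed
  moreover have "(\<lambda>z. (- 1) * p' z * (1 / p z) * (1 / p z)) \<in> polys ?C"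
  proof -
    have inv: "(\<lambda>z. 1 / p z) \<in> polys ?C" by (rule polys.pbase) simp
    have "B \<subseteq> ?C" by auto
    then have "(\<lambda>z. (- 1) * p' z) \<in> polys ?C"
      by (rule polys.pmult[OF polys.pconst polys_mono[OF p'(1)]])
    then have "(\<lambda>z. (- 1) * p' z * (1 / p z)) \<in> polys ?C"
      by (rule polys.pmult[OF _ inv])
    then show ?thesis by (rule polys.pmult[OF _ inv])
  qed
  ultimately show "\<exists>q\<in>polys ?C. \<forall>z\<in>S. ((\<lambda>s. 1 / p (z + s *\<^sub>R v)) has_real_derivative q z) (at 0)"
    by (intro bexI[of _ "\<lambda>z. (- 1) * p' z * (1 / p z) * (1 / p z)"]) auto
qed

text \<open>Adjoining the reciprocal of a nowhere vanishing polynomial preserves closedness.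
  This is how inverse matrices enter the algebra.\<close>

lemma closed_base_inverse:
  assumes cb: "closed_base B S" and p: "p \<in> polys B" and nz: "\<And>z. z \<in> S \<Longrightarrow> p z \<noteq> 0"
  shows "closed_base (insert (\<lambda>z. 1 / p z) B) S"
  unfolding closed_base_def
proof
  fix b assume b: "b \<in> insert (\<lambda>z. 1 / p z) B"
  show "continuous_on S b \<and> poly_line_derivs (insert (\<lambda>z. 1 / p z) B) S b"
  proof (cases "b \<in> B")
    case True
    then show ?thesis using cb poly_line_derivs_mono[of B S b] unfolding closed_base_def by blast
  next
    case False
    then have b_inv: "b = (\<lambda>z. 1 / p z)" using b by simp
    have "continuous_on S (\<lambda>z. 1 / p z)"
      using polys_continuous[OF cb p] nz by (intro continuous_on_divide continuous_on_const) auto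
    then show ?thesis unfolding b_inv using reciprocal_line_derivs[OF assms] by blast
  qed
qed

locale poly_algebra =
  fixes S :: "'a::real_normed_vector set" and B :: "('a \<Rightarrow> real) set"
  assumes openS: "open S" and cb: "closed_base B S"
begin

definition Alg :: "('a \<Rightarrow> real) set" where
  "Alg = {H. \<exists>p\<in>polys B. \<forall>z\<in>S. H z = p z}"

lemma Alg_polys: "p \<in> polys B \<Longrightarrow> p \<in> Alg"
  unfolding Alg_def by blast

lemma Alg_base: "b \<in> B \<Longrightarrow> b \<in> Alg"
  by (rule Alg_polys) (rule pbase)

lemma Alg_cong: "H \<in> Alg \<Longrightarrow> (\<And>z. z \<in> S \<Longrightarrow> K z = H z) \<Longrightarrow> K \<in> Alg"
  unfolding Alg_def by auto

lemma Alg_const[simp, intro]: "(\<lambda>z. c) \<in> Alg"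
  by (rule Alg_polys) (rule pconst)

lemma Alg_add[intro]: "H \<in> Alg \<Longrightarrow> K \<in> Alg \<Longrightarrow> (\<lambda>z. H z + K z) \<in> Alg"
proof -
  assume "H \<in> Alg" "K \<in> Alg"
  then obtain p q where "p \<in> polys B" "\<forall>z\<in>S. H z = p z" "q \<in> polys B" "\<forall>z\<in>S. K z = q z"
    unfolding Alg_def by blast
  then show ?thesis unfolding Alg_def
    by (intro CollectI bexI[of _ "\<lambda>z. p z + q z"] polys.padd) auto
qed

lemma Alg_mult[intro]: "H \<in> Alg \<Longrightarrow> K \<in> Alg \<Longrightarrow> (\<lambda>z. H z * K z) \<in> Alg"
proof -
  assume "H \<in> Alg" "K \<in> Alg"
  then obtain p q where "p \<in> polys B" "\<forall>z\<in>S. H z = p z" "q \<in> polys B" "\<forall>z\<in>S. K z = q z"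
    unfolding Alg_def by blast
  then show ?thesis unfolding Alg_def
    by (intro CollectI bexI[of _ "\<lambda>z. p z * q z"] polys.pmult) auto
qed

lemma Alg_cmult[intro]: "H \<in> Alg \<Longrightarrow> (\<lambda>z. c * H z) \<in> Alg"
  by (rule Alg_mult[OF Alg_const])

lemma Alg_minus[intro]: "H \<in> Alg \<Longrightarrow> (\<lambda>z. - H z) \<in> Alg"
  using Alg_cmult[of H "-1"] by simp

lemma Alg_diff[intro]: "H \<in> Alg \<Longrightarrow> K \<in> Alg \<Longrightarrow> (\<lambda>z. H z - K z) \<in> Alg"
  using Alg_add[OF _ Alg_minus, of H K] by simp

lemma Alg_sum[intro]: "finite A \<Longrightarrow> (\<And>i. i \<in> A \<Longrightarrow> f i \<in> Alg) \<Longrightarrow> (\<lambda>z. \<Sum>i\<in>A. f i z) \<in> Alg"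
proof (induction A rule: finite_induct)
  case empty then show ?case by simp
next
  case (insert x F) then show ?case by (simp add: Alg_add)
qed

lemma Alg_prod[intro]: "finite A \<Longrightarrow> (\<And>i. i \<in> A \<Longrightarrow> f i \<in> Alg) \<Longrightarrow> (\<lambda>z. \<Prod>i\<in>A. f i z) \<in> Alg"
proof (induction A rule: finite_induct)
  case empty then show ?case by simp
next
  case (insert x F) then show ?case by (simp add: Alg_mult)
qed

lemma Alg_continuous: "H \<in> Alg \<Longrightarrow> continuous_on S H"
proof -
  assume "H \<in> Alg"
  then obtain p where p: "p \<in> polys B" "\<And>z. z \<in> S \<Longrightarrow> H z = p z" unfolding Alg_def by blast
  then show ?thesis using polys_continuous[OF cb p(1)] continuous_on_cong by fastforce
qed

lemma Alg_line_deriv_in_polys: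
  assumes "H \<in> Alg"
  shows "\<exists>q\<in>polys B. \<forall>z\<in>S. ((\<lambda>s. H (z + s *\<^sub>R v)) has_real_derivative q z) (at 0)"
proof -
  obtain p where p: "p \<in> polys B" "\<And>z. z \<in> S \<Longrightarrow> H z = p z" using assms unfolding Alg_def by blast
  obtain q where q: "q \<in> polys B" "\<And>z. z \<in> S \<Longrightarrow> ((\<lambda>s. p (z + s *\<^sub>R v)) has_real_derivative q z) (at 0)"
    using polys_line_derivs[OF cb p(1)] unfolding poly_line_derivs_def by blast
  have "\<forall>z\<in>S. ((\<lambda>s. H (z + s *\<^sub>R v)) has_real_derivative q z) (at 0)"
    using line_deriv_cong_open[OF openS _ p(2) q(2)] by blast
  then show ?thesis using q(1) by blast
qed

lemma Alg_line_deriv: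
  assumes "H \<in> Alg" "z \<in> S"
  shows "((\<lambda>s. H (z + s *\<^sub>R v)) has_real_derivative dir_deriv v H z) (at 0)"
  using Alg_line_deriv_in_polys[OF assms(1), of v] assms(2) dir_deriv_eqI by metis

lemma Alg_dir_deriv[intro]:
  assumes "H \<in> Alg"
  shows "dir_deriv v H \<in> Alg"
proof -
  obtain q where q: "q \<in> polys B" "\<forall>z\<in>S. ((\<lambda>s. H (z + s *\<^sub>R v)) has_real_derivative q z) (at 0)"
    using Alg_line_deriv_in_polys[OF assms] by blast
  then show ?thesis unfolding Alg_def using dir_deriv_eqI by blast
qed

lemma Alg_dir_derivs[intro]: "H \<in> Alg \<Longrightarrow> dir_derivs vs H \<in> Alg"
  by (induction vs) auto

lemma Alg_line_deriv_at:
  assumes "H \<in> Alg" "z + s0 *\<^sub>R v \<in> S"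
  shows "((\<lambda>s. H (z + s *\<^sub>R v)) has_real_derivative dir_deriv v H (z + s0 *\<^sub>R v)) (at s0)"
  by (rule line_deriv_shift) (rule Alg_line_deriv[OF assms])

lemma dir_deriv_add:
  assumes "H \<in> Alg" "K \<in> Alg" "z \<in> S"
  shows "dir_deriv v (\<lambda>x. H x + K x) z = dir_deriv v H z + dir_deriv v K z"
  by (rule dir_deriv_eqI) (rule DERIV_add[OF Alg_line_deriv[OF assms(1,3)] Alg_line_deriv[OF assms(2,3)]])

lemma dir_deriv_diff:
  assumes "H \<in> Alg" "K \<in> Alg" "z \<in> S"
  shows "dir_deriv v (\<lambda>x. H x - K x) z = dir_deriv v H z - dir_deriv v K z"
  by (rule dir_deriv_eqI) (rule DERIV_diff[OF Alg_line_deriv[OF assms(1,3)] Alg_line_deriv[OF assms(2,3)]])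

lemma dir_deriv_mult:
  assumes "H \<in> Alg" "K \<in> Alg" "z \<in> S"
  shows "dir_deriv v (\<lambda>x. H x * K x) z = dir_deriv v H z * K z + H z * dir_deriv v K z"
proof (rule dir_deriv_eqI)
  show "((\<lambda>s. H (z + s *\<^sub>R v) * K (z + s *\<^sub>R v)) has_real_derivative
      dir_deriv v H z * K z + H z * dir_deriv v K z) (at 0)"
    using DERIV_mult[OF Alg_line_deriv[OF assms(1,3), of v] Alg_line_deriv[OF assms(2,3), of v]] by (simp add: mult.commute)
qed

lemma dir_deriv_const: "dir_deriv v (\<lambda>x. c) z = 0"
  by (rule dir_deriv_eqI) simp

lemma dir_deriv_cmult:
  assumes "H \<in> Alg" "z \<in> S"
  shows "dir_deriv v (\<lambda>x. c * H x) z = c * dir_deriv v H z"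
  by (rule dir_deriv_eqI) (rule DERIV_cmult[OF Alg_line_deriv[OF assms]])

lemma dir_deriv_sum:
  assumes "finite A" "\<And>i. i \<in> A \<Longrightarrow> f i \<in> Alg" "z \<in> S"
  shows "dir_deriv v (\<lambda>x. \<Sum>i\<in>A. f i x) z = (\<Sum>i\<in>A. dir_deriv v (f i) z)"
proof (rule dir_deriv_eqI)
  show "((\<lambda>s. \<Sum>i\<in>A. f i (z + s *\<^sub>R v)) has_real_derivative (\<Sum>i\<in>A. dir_deriv v (f i) z)) (at 0)"
    by (rule DERIV_sum) (rule Alg_line_deriv[OF assms(2) assms(3)])
qed

section \<open>Symmetry of mixed directional derivatives\<close>

text \<open>The mixed second difference of \<open>H\<close> over a small parallelogram equals the area
  times a mixed second derivative at an interior point (mean value theorem applied twice).\<close>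

lemma second_difference_mvt:
  assumes H: "H \<in> Alg" and h: "h > 0"
    and box: "\<And>a b. 0 \<le> a \<Longrightarrow> a \<le> h \<Longrightarrow> 0 \<le> b \<Longrightarrow> b \<le> h \<Longrightarrow> z + a *\<^sub>R u + b *\<^sub>R v \<in> S"
  obtains a b where "0 < a" "a < h" "0 < b" "b < h"
    "H (z + h *\<^sub>R u + h *\<^sub>R v) - H (z + h *\<^sub>R u) - H (z + h *\<^sub>R v) + H z
       = h * h * dir_deriv v (dir_deriv u H) (z + a *\<^sub>R u + b *\<^sub>R v)"
proof -
  define \<phi> where "\<phi> s = H (z + h *\<^sub>R v + s *\<^sub>R u) - H (z + s *\<^sub>R u)" for s
  have "\<exists>a. 0 < a \<and> a < h \<and> \<phi> h - \<phi> 0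
      = (h - 0) * (dir_deriv u H (z + h *\<^sub>R v + a *\<^sub>R u) - dir_deriv u H (z + a *\<^sub>R u))"
  proof (rule MVT2[OF h])
    fix x assume x: "0 \<le> x" "x \<le> h"
    have "z + h *\<^sub>R v + x *\<^sub>R u \<in> S" "z + x *\<^sub>R u \<in> S"
      using box[of x h] box[of x 0] x h by (simp_all add: algebra_simps)
    then show "(\<phi> has_real_derivative
        dir_deriv u H (z + h *\<^sub>R v + x *\<^sub>R u) - dir_deriv u H (z + x *\<^sub>R u)) (at x)"
      unfolding \<phi>_def by (intro DERIV_diff Alg_line_deriv_at H)
  qed
  then obtain a where a: "0 < a" "a < h"
    "H (z + h *\<^sub>R u + h *\<^sub>R v) - H (z + h *\<^sub>R u) - H (z + h *\<^sub>R v) + H z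
       = h * (dir_deriv u H (z + a *\<^sub>R u + h *\<^sub>R v) - dir_deriv u H (z + a *\<^sub>R u))"
    by (auto simp: \<phi>_def algebra_simps)
  have "\<exists>b. 0 < b \<and> b < h \<and>
      dir_deriv u H (z + a *\<^sub>R u + h *\<^sub>R v) - dir_deriv u H (z + a *\<^sub>R u + 0 *\<^sub>R v)
        = (h - 0) * dir_deriv v (dir_deriv u H) (z + a *\<^sub>R u + b *\<^sub>R v)"
  proof (rule MVT2[OF h])
    fix x assume "0 \<le> x" "x \<le> h"
    then show "((\<lambda>s. dir_deriv u H (z + a *\<^sub>R u + s *\<^sub>R v)) has_real_derivative
        dir_deriv v (dir_deriv u H) (z + a *\<^sub>R u + x *\<^sub>R v)) (at x)"
      using H box[of a x] a by (intro Alg_line_deriv_at) auto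
  qed
  then obtain b where "0 < b" "b < h"
    "dir_deriv u H (z + a *\<^sub>R u + h *\<^sub>R v) - dir_deriv u H (z + a *\<^sub>R u)
       = h * dir_deriv v (dir_deriv u H) (z + a *\<^sub>R u + b *\<^sub>R v)"
    by auto
  with a show ?thesis by (intro that[of a b]) (simp_all add: algebra_simps)
qed

text \<open>Both mixed derivatives are continuous and, by the previous lemma applied in the two orders,
  agree at points arbitrarily close to \<open>z\<close>.\<close>

lemma dir_deriv_commute:
  assumes H: "H \<in> Alg" and z: "z \<in> S"
  shows "dir_deriv u (dir_deriv v H) z = dir_deriv v (dir_deriv u H) z"
proof (rule ccontr)
  let ?A = "dir_deriv u (dir_deriv v H)" and ?B = "dir_deriv v (dir_deriv u H)"
  assume ne: "?A z \<noteq> ?B z"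
  define e where "e = \<bar>?A z - ?B z\<bar> / 2"
  have e: "e > 0" using ne by (simp add: e_def)
  have cA: "continuous_on S ?A" and cB: "continuous_on S ?B" using H by (auto intro!: Alg_continuous)
  obtain dA where dA: "dA > 0" "\<And>y. y \<in> S \<Longrightarrow> dist y z < dA \<Longrightarrow> dist (?A y) (?A z) < e"
    using cA z e unfolding continuous_on_iff by blast
  obtain dB where dB: "dB > 0" "\<And>y. y \<in> S \<Longrightarrow> dist y z < dB \<Longrightarrow> dist (?B y) (?B z) < e"
    using cB z e unfolding continuous_on_iff by blast
  obtain r where r: "r > 0" "ball z r \<subseteq> S" using openS z open_contains_ball by blast
  define d where "d = Min {dA, dB, r}"
  have d: "d > 0" "d \<le> dA" "d \<le> dB" "d \<le> r" using dA dB r by (auto simp: d_def)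
  obtain h where h: "h > 0" and near: "\<And>a b x y. 0 \<le> a \<Longrightarrow> a \<le> h \<Longrightarrow> 0 \<le> b \<Longrightarrow> b \<le> h \<Longrightarrow>
      {x, y} = {u, v} \<Longrightarrow> dist (z + a *\<^sub>R x + b *\<^sub>R y) z < d"
    using small_parallelogram[OF d(1)] by blast
  have box: "z + a *\<^sub>R x + b *\<^sub>R y \<in> S"
    if "0 \<le> a" "a \<le> h" "0 \<le> b" "b \<le> h" "{x, y} = {u, v}" for a b x y
    using near[OF that] d(4) r(2) by (auto simp: dist_commute)
  obtain a b where ab: "0 < a" "a < h" "0 < b" "b < h"
    "H (z + h *\<^sub>R u + h *\<^sub>R v) - H (z + h *\<^sub>R u) - H (z + h *\<^sub>R v) + H z
       = h * h * ?B (z + a *\<^sub>R u + b *\<^sub>R v)"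
    by (rule second_difference_mvt[OF H h]) (auto intro!: box)
  obtain a' b' where ab': "0 < a'" "a' < h" "0 < b'" "b' < h"
    "H (z + h *\<^sub>R v + h *\<^sub>R u) - H (z + h *\<^sub>R v) - H (z + h *\<^sub>R u) + H z
       = h * h * ?A (z + a' *\<^sub>R v + b' *\<^sub>R u)"
    by (rule second_difference_mvt[OF H h, where u=v and v=u]) (auto intro!: box simp: insert_commute)
  have eq: "?B (z + a *\<^sub>R u + b *\<^sub>R v) = ?A (z + a' *\<^sub>R v + b' *\<^sub>R u)"
    using ab(5) ab'(5) h by (simp add: algebra_simps)
  have "dist (?B (z + a *\<^sub>R u + b *\<^sub>R v)) (?B z) < e"
  proof (rule dB(2))
    show "z + a *\<^sub>R u + b *\<^sub>R v \<in> S" by (rule box) (use ab in auto)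
    show "dist (z + a *\<^sub>R u + b *\<^sub>R v) z < dB" using near[of a b u v] ab d(3) by auto
  qed
  moreover have "dist (?A (z + a' *\<^sub>R v + b' *\<^sub>R u)) (?A z) < e"
  proof (rule dA(2))
    show "z + a' *\<^sub>R v + b' *\<^sub>R u \<in> S" by (rule box) (use ab' in \<open>auto simp: insert_commute\<close>)
    show "dist (z + a' *\<^sub>R v + b' *\<^sub>R u) z < dA" using near[of a' b' v u] ab' d(2) by (auto simp: insert_commute)
  qed
  ultimately have "dist (?A z) (?B z) < 2 * e"
    using eq dist_triangle[of "?A z" "?B z" "?B (z + a *\<^sub>R u + b *\<^sub>R v)"]
    by (simp add: dist_commute)
  then show False unfolding e_def by (simp add: dist_real_def)
qed
end

lemma matrix_inv_props:
  fixes A :: "real^'n::finite^'n"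
  assumes "det A \<noteq> 0"
  shows "A ** matrix_inv A = mat 1 \<and> matrix_inv A ** A = mat 1"
proof -
  have "invertible A" using assms invertible_det_nz by blast
  then show ?thesis unfolding invertible_def matrix_inv_def by (rule someI_ex)
qed

lemma matrix_inv_entry:
  fixes A :: "real^'n::finite^'n"
  assumes d: "det A \<noteq> 0"
  shows "matrix_inv A $ k $ j = det (\<chi> p q. if q = k then (if p = j then 1 else 0) else A $ p $ q) / det A"
proof -
  let ?x = "matrix_inv A *v axis j 1"
  have "A *v ?x = axis j 1"
    using matrix_inv_props[OF d] by (simp add: matrix_vector_mul_assoc)
  then have "?x = (\<chi> k. det (\<chi> p q. if q = k then axis j 1 $ p else A $ p $ q) / det A)"
    using cramer[OF d] by blast
  moreover have "?x $ k = matrix_inv A $ k $ j"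
    by (simp add: matrix_vector_mult_def axis_def if_distrib cong: if_cong)
  moreover have "(\<chi> p q. if q = k then axis j 1 $ p else A $ p $ q) =
      (\<chi> p q. if q = k then (if p = j then 1 else 0) else A $ p $ q)"
    by (simp add: vec_eq_iff axis_def)
  ultimately show ?thesis by simp
qed

lemma det_polys:
  assumes "\<And>p q. (\<lambda>z. M z $ p $ q) \<in> polys B"
  shows "(\<lambda>z. det (M z :: real^'n::finite^'n)) \<in> polys B"
  unfolding det_def
proof (rule polys_sum)
  show "finite {p. p permutes (UNIV::'n set)}" by (simp add: finite_permutations)
  fix p
  show "(\<lambda>z. of_int (sign p) * (\<Prod>i\<in>UNIV. M z $ i $ p i)) \<in> polys B"
    by (rule polys.pmult[OF polys.pconst polys_prod]) (use assms in auto)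
qed

context poly_algebra
begin

lemma det_Alg:
  assumes "\<And>p q. (\<lambda>z. M z $ p $ q) \<in> Alg"
  shows "(\<lambda>z. det (M z :: real^'n::finite^'n)) \<in> Alg"
  unfolding det_def
proof (rule Alg_sum)
  show "finite {p. p permutes (UNIV::'n set)}" by (simp add: finite_permutations)
  fix p
  show "(\<lambda>z. of_int (sign p) * (\<Prod>i\<in>UNIV. M z $ i $ p i)) \<in> Alg"
    by (rule Alg_mult[OF Alg_const Alg_prod]) (use assms in auto)
qed

lemma matrix_inv_Alg:
  assumes M: "\<And>p q. (\<lambda>z. M z $ p $ q) \<in> Alg"
    and d: "(\<lambda>z. 1 / det (M z)) \<in> Alg" and nz: "\<And>z. z \<in> S \<Longrightarrow> det (M z :: real^'n::finite^'n) \<noteq> 0"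
  shows "(\<lambda>z. matrix_inv (M z) $ k $ j) \<in> Alg"
proof (rule Alg_cong)
  let ?C = "\<lambda>z. det (\<chi> p q. if q = k then (if p = j then 1 else 0) else M z $ p $ q)"
  have "?C \<in> Alg"
  proof (rule det_Alg)
    fix p q
    show "(\<lambda>z. (\<chi> p q. if q = k then (if p = j then 1 else 0) else M z $ p $ q) $ p $ q) \<in> Alg"
      using M by (cases "q = k") auto
  qed
  then show "(\<lambda>z. ?C z * (1 / det (M z))) \<in> Alg" using d by (rule Alg_mult)
  fix z assume "z \<in> S"
  then show "matrix_inv (M z) $ k $ j = ?C z * (1 / det (M z))"
    using matrix_inv_entry[OF nz] by simp
qed

end

section \<open>The cubic and its graph metric\<close>

lemma pdx_dd: "pdx k F x = dir_deriv (axis k 1) F x"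
  by (simp add: pdx_def dir_deriv_def)

lemma axis_nth1: "axis k (1::real) $ q = (if q = k then 1 else 0)"
  by (simp add: axis_def)

definition grad_f :: "('n::finite \<Rightarrow> 'n \<Rightarrow> real) \<Rightarrow> 'n \<Rightarrow> real^'n \<Rightarrow> real" where
  "grad_f a k y = (\<Sum>q\<in>UNIV. a k q * (y $ q)^2) + 2 * y $ k * (\<Sum>r\<in>UNIV. a r k * y $ r)"

lemma pdx_cubic: "pdx k (cubic_f a) y = grad_f a k y"
proof -
  have deriv: "((\<lambda>s. cubic_f a (y + s *\<^sub>R axis k 1)) has_real_derivative
      (\<Sum>r\<in>UNIV. \<Sum>q\<in>UNIV. a r q * ((if r = k then 1 else 0) * (y $ q)^2
        + y $ r * (2 * y $ q * (if q = k then 1 else 0))))) (at 0)"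
    unfolding cubic_f_def by (auto intro!: derivative_eq_intros simp: axis_nth1 power2_eq_square algebra_simps)
  have sum_if: "(\<Sum>q\<in>UNIV. if P then h q else 0) = (if P then (\<Sum>q\<in>UNIV. h q) else 0)"
    for P and h :: "'n \<Rightarrow> real" by simp
  have "(\<Sum>r\<in>UNIV. \<Sum>q\<in>UNIV. a r q * ((if r = k then 1 else 0) * (y $ q)^2
        + y $ r * (2 * y $ q * (if q = k then 1 else 0)))) = grad_f a k y"
    by (simp add: grad_f_def sum.distrib sum_distrib_left sum_distrib_right ring_distribs
        if_distrib[of "\<lambda>x. _ * x"] if_distrib[of "\<lambda>x. x * _"] sum.delta' mult_ac sum_if cong: if_cong)
  then show ?thesis unfolding pdx_dd using deriv by (simp add: dir_deriv_eqI)
qed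

definition coord_base :: "(real^'n::finite \<Rightarrow> real) set" where
  "coord_base = range (\<lambda>q y. y $ q)"

lemma closed_coord_base: "closed_base (coord_base :: (real^'n::finite \<Rightarrow> real) set) UNIV"
  unfolding closed_base_def poly_line_derivs_def coord_base_def
proof (intro ballI conjI allI)
  fix b :: "real^'n \<Rightarrow> real" and v :: "real^'n"
  assume "b \<in> range (\<lambda>q y. y $ q)"
  then obtain q where b: "b = (\<lambda>y. y $ q)" by blast
  show "continuous_on UNIV b" unfolding b by (intro continuous_intros)
  have "\<forall>z\<in>UNIV. ((\<lambda>s. b (z + s *\<^sub>R v)) has_real_derivative (\<lambda>z. v $ q) z) (at 0)"
    unfolding b by (auto intro!: derivative_eq_intros)
  then show "\<exists>r\<in>polys (range (\<lambda>q y. y $ q)). \<forall>z\<in>UNIV. ((\<lambda>s. b (z + s *\<^sub>R v)) has_real_derivative r z) (at 0)"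
    by (intro bexI[of _ "\<lambda>z. v $ q"] polys.pconst) simp
qed

lemma coord_polys: "(\<lambda>y. y $ q) \<in> polys coord_base"
  unfolding coord_base_def by (rule polys.pbase) blast

lemma grad_f_polys: "grad_f a k \<in> polys coord_base"
proof -
  have "(\<lambda>y. (\<Sum>q\<in>UNIV. a k q * ((y $ q) * (y $ q))) + 2 * y $ k * (\<Sum>r\<in>UNIV. a r k * y $ r)) \<in> polys coord_base"
    by (intro polys.padd polys.pmult polys_sum polys.pconst coord_polys) simp_all
  moreover have "grad_f a k = (\<lambda>y. (\<Sum>q\<in>UNIV. a k q * ((y $ q) * (y $ q))) + 2 * y $ k * (\<Sum>r\<in>UNIV. a r k * y $ r))"
    by (simp add: grad_f_def fun_eq_iff power2_eq_square)
  ultimately show ?thesis by simp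
qed

definition gmat :: "('n::finite \<Rightarrow> 'n \<Rightarrow> real) \<Rightarrow> real^'n \<Rightarrow> real^'n^'n" where
  "gmat a y = (\<chi> i j. (if i = j then 1 else 0) + grad_f a i y * grad_f a j y)"

lemma graph_metric_gmat: "graph_metric (cubic_f a) y = gmat a y"
  by (simp add: graph_metric_def gmat_def pdx_cubic)

lemma gmat_polys: "(\<lambda>y. gmat a y $ i $ j) \<in> polys coord_base"
proof -
  have "(\<lambda>y. gmat a y $ i $ j) = (\<lambda>y. (if i = j then 1 else 0) + grad_f a i y * grad_f a j y)"
    by (simp add: gmat_def fun_eq_iff)
  moreover have "(\<lambda>y. (if i = j then 1 else 0) + grad_f a i y * grad_f a j y) \<in> polys coord_base"
    by (intro polys.padd polys.pmult polys.pconst grad_f_polys)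
  ultimately show ?thesis by simp
qed

lemma gmat_mult_vec: "(gmat a y *v x) $ i = x $ i + grad_f a i y * (\<Sum>j\<in>UNIV. grad_f a j y * x $ j)"
proof -
  have "(gmat a y *v x) $ i = (\<Sum>j\<in>UNIV. (if i = j then x $ j else 0) + grad_f a i y * (grad_f a j y * x $ j))"
    unfolding gmat_def matrix_vector_mult_def by (simp add: algebra_simps, intro sum.cong refl) auto
  also have "\<dots> = x $ i + grad_f a i y * (\<Sum>j\<in>UNIV. grad_f a j y * x $ j)"
    by (simp add: sum.distrib sum_distrib_left)
  finally show ?thesis .
qed

text \<open>The graph metric is positive definite (\<open>w \<bullet> g w = |w|\<^sup>2 + (\<nabla>f \<bullet> w)\<^sup>2\<close>), so it is invertible
  everywhere.\<close>

lemma det_gmat_nonzero: "det (gmat a y) \<noteq> 0"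
proof -
  have inj: "inj ((*v) (gmat a y))"
  proof (rule injI)
    fix x x' assume eq: "gmat a y *v x = gmat a y *v x'"
    define w where "w = x - x'"
    have w0: "gmat a y *v w = 0"
      using eq by (simp add: w_def matrix_vector_mult_diff_distrib)
    have "w \<bullet> (gmat a y *v w) = (\<Sum>i\<in>UNIV. (w $ i)^2) + (\<Sum>j\<in>UNIV. grad_f a j y * w $ j)^2"
      by (simp add: inner_vec_def gmat_mult_vec algebra_simps sum.distrib power2_eq_square sum_distrib_left
          sum_distrib_right)
    then have "(\<Sum>i\<in>UNIV. (w $ i)^2) + (\<Sum>j\<in>UNIV. grad_f a j y * w $ j)^2 = 0" using w0 by simp
    then have "(\<Sum>i\<in>UNIV. (w $ i)^2) = 0"
      by (smt (verit) sum_nonneg zero_le_power2)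
    then have "\<forall>i\<in>UNIV. (w $ i)^2 = 0"
      using sum_nonneg_eq_0_iff[of UNIV "\<lambda>i. (w $ i)^2"] by simp
    then have "w = 0" by (simp add: vec_eq_iff)
    then show "x = x'" by (simp add: w_def)
  qed
  then have "invertible (gmat a y)"
    using matrix_left_invertible_injective invertible_left_inverse by blast
  then show ?thesis using invertible_det_nz by blast
qed

text \<open>Adjoining \<open>1 / det g\<close> gives a closed base containing the entries of \<open>g\<close> and of \<open>g\<^sup>-\<^sup>1\<close>.\<close>

definition graph_base :: "('n::finite \<Rightarrow> 'n \<Rightarrow> real) \<Rightarrow> (real^'n \<Rightarrow> real) set" where
  "graph_base a = insert (\<lambda>y. 1 / det (gmat a y)) coord_base"

lemma closed_graph_base: "closed_base (graph_base a) UNIV"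
  unfolding graph_base_def
  by (rule closed_base_inverse[OF closed_coord_base det_polys[OF gmat_polys]]) (rule det_gmat_nonzero)

section \<open>Vanishing orders at the origin\<close>

locale poly_algebra_UNIV = poly_algebra UNIV B for B :: "('a::real_normed_vector \<Rightarrow> real) set"
begin

lemma dir_deriv_fun_add: "H \<in> Alg \<Longrightarrow> K \<in> Alg \<Longrightarrow> dir_deriv v (\<lambda>x. H x + K x) = (\<lambda>x. dir_deriv v H x + dir_deriv v K x)"
  by (rule ext) (rule dir_deriv_add, auto)

lemma dir_deriv_fun_diff: "H \<in> Alg \<Longrightarrow> K \<in> Alg \<Longrightarrow> dir_deriv v (\<lambda>x. H x - K x) = (\<lambda>x. dir_deriv v H x - dir_deriv v K x)"
  by (rule ext) (rule dir_deriv_diff, auto)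

lemma dir_deriv_fun_mult: "H \<in> Alg \<Longrightarrow> K \<in> Alg \<Longrightarrow> dir_deriv v (\<lambda>x. H x * K x) = (\<lambda>x. dir_deriv v H x * K x + H x * dir_deriv v K x)"
  by (rule ext) (rule dir_deriv_mult, auto)

lemma dir_deriv_fun_cmult: "H \<in> Alg \<Longrightarrow> dir_deriv v (\<lambda>x. c * H x) = (\<lambda>x. c * dir_deriv v H x)"
  by (rule ext) (rule dir_deriv_cmult, auto)

lemma dir_deriv_fun_const: "dir_deriv v (\<lambda>x. c) = (\<lambda>x. 0)"
  by (rule ext) (rule dir_deriv_const)

lemma dir_deriv_fun_sum: "finite A \<Longrightarrow> (\<And>i. i \<in> A \<Longrightarrow> f i \<in> Alg) \<Longrightarrow>
    dir_deriv v (\<lambda>x. \<Sum>i\<in>A. f i x) = (\<lambda>x. \<Sum>i\<in>A. dir_deriv v (f i) x)"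
  by (rule ext) (rule dir_deriv_sum, auto)

lemma dir_derivs_add: "H \<in> Alg \<Longrightarrow> K \<in> Alg \<Longrightarrow> dir_derivs vs (\<lambda>x. H x + K x) = (\<lambda>x. dir_derivs vs H x + dir_derivs vs K x)"
  by (induction vs) (simp_all add: dir_deriv_fun_add Alg_dir_derivs)

lemma dir_derivs_cmult: "H \<in> Alg \<Longrightarrow> dir_derivs vs (\<lambda>x. c * H x) = (\<lambda>x. c * dir_derivs vs H x)"
  by (induction vs) (simp_all add: dir_deriv_fun_cmult Alg_dir_derivs)

lemma dir_derivs_diff: "H \<in> Alg \<Longrightarrow> K \<in> Alg \<Longrightarrow> dir_derivs vs (\<lambda>x. H x - K x) = (\<lambda>x. dir_derivs vs H x - dir_derivs vs K x)"
  by (induction vs) (simp_all add: dir_deriv_fun_diff Alg_dir_derivs)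

lemma dir_derivs_sum: "finite A \<Longrightarrow> (\<And>i. i \<in> A \<Longrightarrow> f i \<in> Alg) \<Longrightarrow>
    dir_derivs vs (\<lambda>x. \<Sum>i\<in>A. f i x) = (\<lambda>x. \<Sum>i\<in>A. dir_derivs vs (f i) x)"
  by (induction vs) (simp_all add: dir_deriv_fun_sum Alg_dir_derivs)

definition vanishes :: "('a \<Rightarrow> real) \<Rightarrow> nat \<Rightarrow> bool" where
  "vanishes H k \<longleftrightarrow> (\<forall>vs. length vs < k \<longrightarrow> dir_derivs vs H 0 = 0)"

lemma vanishesD: "vanishes H k \<Longrightarrow> length vs < k \<Longrightarrow> dir_derivs vs H 0 = 0"
  unfolding vanishes_def by blast

lemma vanishes_0[simp]: "vanishes H 0"
  unfolding vanishes_def by simp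

lemma vanishes_dir_deriv: "vanishes H k \<Longrightarrow> vanishes (dir_deriv v H) (k - 1)"
  unfolding vanishes_def
proof (intro allI impI)
  fix vs :: "'a list" assume H: "\<forall>vs. length vs < k \<longrightarrow> dir_derivs vs H 0 = 0" and l: "length vs < k - 1"
  have "length (vs @ [v]) < k" using l by simp
  then have "dir_derivs (vs @ [v]) H 0 = 0" using H by blast
  then show "dir_derivs vs (dir_deriv v H) 0 = 0" by (simp add: dir_derivs_append)
qed

lemma vanishes_add: "H \<in> Alg \<Longrightarrow> K \<in> Alg \<Longrightarrow> vanishes H k \<Longrightarrow> vanishes K k \<Longrightarrow> vanishes (\<lambda>x. H x + K x) k"
  by (simp add: vanishes_def dir_derivs_add)

lemma vanishes_diff: "H \<in> Alg \<Longrightarrow> K \<in> Alg \<Longrightarrow> vanishes H k \<Longrightarrow> vanishes K k \<Longrightarrow> vanishes (\<lambda>x. H x - K x) k"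
  by (simp add: vanishes_def dir_derivs_diff)

lemma vanishes_cmult: "H \<in> Alg \<Longrightarrow> vanishes H k \<Longrightarrow> vanishes (\<lambda>x. c * H x) k"
  by (simp add: vanishes_def dir_derivs_cmult)

lemma vanishes_sum: "finite A \<Longrightarrow> (\<And>i. i \<in> A \<Longrightarrow> f i \<in> Alg) \<Longrightarrow> (\<And>i. i \<in> A \<Longrightarrow> vanishes (f i) k) \<Longrightarrow>
   vanishes (\<lambda>x. \<Sum>i\<in>A. f i x) k"
  by (simp add: vanishes_def dir_derivs_sum)

lemma vanishes_mult:
  assumes "H \<in> Alg" "K \<in> Alg" "vanishes H k" "vanishes K m"
  shows "vanishes (\<lambda>x. H x * K x) (k + m)"
  unfolding vanishes_def
proof (intro allI impI)
  fix vs :: "'a list"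
  show "length vs < k + m \<Longrightarrow> dir_derivs vs (\<lambda>x. H x * K x) 0 = 0"
    using assms
  proof (induction vs arbitrary: H K k m rule: rev_induct)
    case Nil
    then have "H 0 = 0 \<or> K 0 = 0"
      using vanishesD[of H k "[]"] vanishesD[of K m "[]"] by (cases "k = 0") auto
    then show ?case by auto
  next
    case (snoc v us)
    note H = snoc.prems(2-5)
    have "dir_derivs (us @ [v]) (\<lambda>x. H x * K x) =
        dir_derivs us (\<lambda>x. dir_deriv v H x * K x + H x * dir_deriv v K x)"
      unfolding dir_derivs_append using H(1,2) by (simp add: dir_deriv_fun_mult)
    also have "\<dots> = (\<lambda>x. dir_derivs us (\<lambda>x. dir_deriv v H x * K x) x +
                      dir_derivs us (\<lambda>x. H x * dir_deriv v K x) x)"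
      using H(1,2) by (intro dir_derivs_add Alg_mult Alg_dir_deriv)
    finally show ?case
      using snoc.IH[OF _ Alg_dir_deriv[OF H(1)] H(2) vanishes_dir_deriv[OF H(3)] H(4)]
        snoc.IH[OF _ H(1) Alg_dir_deriv[OF H(2)] H(3) vanishes_dir_deriv[OF H(4)]] snoc.prems(1)
      by simp
  qed
qed

lemma fourth_deriv_product:
  assumes H: "H \<in> Alg" "vanishes H 2" and K: "K \<in> Alg" "vanishes K 2"
  shows "dir_derivs [a, b, c, d] (\<lambda>x. H x * K x) 0 =
    dir_derivs [c, d] H 0 * dir_derivs [a, b] K 0 + dir_derivs [b, d] H 0 * dir_derivs [a, c] K 0 +
    dir_derivs [a, d] H 0 * dir_derivs [b, c] K 0 + dir_derivs [b, c] H 0 * dir_derivs [a, d] K 0 +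
    dir_derivs [a, c] H 0 * dir_derivs [b, d] K 0 + dir_derivs [a, b] H 0 * dir_derivs [c, d] K 0"
proof -
  have H0: "H 0 = 0" "\<And>v. dir_deriv v H 0 = 0"
    using vanishesD[OF H(2), of "[]"] vanishesD[OF H(2), of "[v]" for v] by auto
  have K0: "K 0 = 0" "\<And>v. dir_deriv v K 0 = 0"
    using vanishesD[OF K(2), of "[]"] vanishesD[OF K(2), of "[v]" for v] by auto
  note S = Alg_dir_deriv Alg_mult Alg_add H(1) K(1)
  have e3: "dir_derivs [b, c, d] (\<lambda>x. H x * K x) = (\<lambda>x.
     dir_deriv b (dir_deriv c (dir_deriv d H)) x * K x + dir_deriv c (dir_deriv d H) x * dir_deriv b K x +
     (dir_deriv b (dir_deriv d H) x * dir_deriv c K x + dir_deriv d H x * dir_deriv b (dir_deriv c K) x) +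
     (dir_deriv b (dir_deriv c H) x * dir_deriv d K x + dir_deriv c H x * dir_deriv b (dir_deriv d K) x +
     (dir_deriv b H x * dir_deriv c (dir_deriv d K) x + H x * dir_deriv b (dir_deriv c (dir_deriv d K)) x)))"
    by (simp add: dir_deriv_fun_mult dir_deriv_fun_add S)
  have X: "dir_derivs [a, b, c, d] (\<lambda>x. H x * K x) 0 = dir_deriv a (dir_derivs [b, c, d] (\<lambda>x. H x * K x)) 0"
    by simp
  show ?thesis unfolding X e3 by (simp add: dir_deriv_add dir_deriv_mult S H0 K0 algebra_simps)
qed

end

interpretation sp: poly_algebra_UNIV "graph_base a" for a :: "'n::finite \<Rightarrow> 'n \<Rightarrow> real"
  by unfold_locales (simp_all add: closed_graph_base)

abbreviation ee :: "'n::finite \<Rightarrow> real^'n" where "ee k \<equiv> axis k 1"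

text \<open>The initial metric \<open>gentry = \<delta> + gpert\<close> and its inverse \<open>ginv\<close>, seen as a time-independent
  family; \<open>chr1\<close> is twice the Christoffel symbol of the first kind, \<open>chr2\<close> the Christoffel symbol
  and \<open>ric_graph\<close> the Ricci tensor of the graph metric. \<open>f3\<close> are the third derivatives of \<open>f\<close>.\<close>

definition gpert :: "('n::finite \<Rightarrow> 'n \<Rightarrow> real) \<Rightarrow> 'n \<Rightarrow> 'n \<Rightarrow> real^'n \<Rightarrow> real" where
  "gpert a i j = (\<lambda>y. grad_f a i y * grad_f a j y)"

definition gentry :: "('n::finite \<Rightarrow> 'n \<Rightarrow> real) \<Rightarrow> 'n \<Rightarrow> 'n \<Rightarrow> real^'n \<Rightarrow> real" where
  "gentry a i j = (\<lambda>y. gmat a y $ i $ j)"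

definition ginv :: "('n::finite \<Rightarrow> 'n \<Rightarrow> real) \<Rightarrow> 'n \<Rightarrow> 'n \<Rightarrow> real^'n \<Rightarrow> real" where
  "ginv a i j = (\<lambda>y. matrix_inv (gmat a y) $ i $ j)"

definition graph_family :: "('n::finite \<Rightarrow> 'n \<Rightarrow> real) \<Rightarrow> real \<Rightarrow> real^'n \<Rightarrow> real^'n^'n" where
  "graph_family a = (\<lambda>t y. gmat a y)"

definition chr1 :: "('n::finite \<Rightarrow> 'n \<Rightarrow> real) \<Rightarrow> 'n \<Rightarrow> 'n \<Rightarrow> 'n \<Rightarrow> real^'n \<Rightarrow> real" where
  "chr1 a j k l = (\<lambda>y. dir_deriv (ee j) (gentry a k l) y + dir_deriv (ee k) (gentry a j l) y - dir_deriv (ee l) (gentry a j k) y)"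

definition chr2 :: "('n::finite \<Rightarrow> 'n \<Rightarrow> real) \<Rightarrow> 'n \<Rightarrow> 'n \<Rightarrow> 'n \<Rightarrow> real^'n \<Rightarrow> real" where
  "chr2 a j k m = (\<lambda>y. Christoffel (graph_family a) 0 y j k m)"

definition ric_graph :: "('n::finite \<Rightarrow> 'n \<Rightarrow> real) \<Rightarrow> 'n \<Rightarrow> 'n \<Rightarrow> real^'n \<Rightarrow> real" where
  "ric_graph a k l = (\<lambda>y. Ric (graph_family a) 0 y k l)"

definition f3 :: "('n::finite \<Rightarrow> 'n \<Rightarrow> real) \<Rightarrow> 'n \<Rightarrow> 'n \<Rightarrow> 'n \<Rightarrow> real" where
  "f3 a k p q = 2 * (a k q * (if p = q then 1 else 0) + a p k * (if q = k then 1 else 0) + a q k * (if p = k then 1 else 0))"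

lemma grad_f_Alg[intro]: "grad_f a k \<in> sp.Alg a"
  by (rule sp.Alg_polys) (rule polys_mono[OF grad_f_polys], simp add: graph_base_def subset_insertI)

lemma gpert_Alg[intro]: "gpert a i j \<in> sp.Alg a"
  unfolding gpert_def by (intro sp.Alg_mult grad_f_Alg)

lemma gentry_Alg[intro]: "gentry a i j \<in> sp.Alg a"
  unfolding gentry_def by (rule sp.Alg_polys) (rule polys_mono[OF gmat_polys], simp add: graph_base_def subset_insertI)

lemma ginv_Alg[intro]: "ginv a i j \<in> sp.Alg a"
  unfolding ginv_def
proof (rule sp.matrix_inv_Alg)
  show "(\<lambda>z. gmat a z $ p $ q) \<in> sp.Alg a" for p q using gentry_Alg[of a p q] by (simp add: gentry_def)
  show "(\<lambda>z. 1 / det (gmat a z)) \<in> sp.Alg a" by (rule sp.Alg_base) (simp add: graph_base_def)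
  show "det (gmat a z) \<noteq> 0" for z by (rule det_gmat_nonzero)
qed

lemma chr1_Alg[intro]: "chr1 a j k l \<in> sp.Alg a"
  unfolding chr1_def by (intro sp.Alg_add sp.Alg_diff sp.Alg_dir_deriv gentry_Alg)

lemma chr2_eq: "chr2 a j k m = (\<lambda>y. 1 / 2 * (\<Sum>l\<in>UNIV. ginv a m l y * chr1 a j k l y))"
  by (simp add: chr2_def Christoffel_def graph_family_def ginv_def chr1_def gentry_def pdx_dd fun_eq_iff)

lemma chr2_Alg[intro]: "chr2 a j k m \<in> sp.Alg a"
  unfolding chr2_eq by (intro sp.Alg_cmult sp.Alg_sum sp.Alg_mult ginv_Alg chr1_Alg) simp_all

lemma ric_graph_eq: "ric_graph a k l = (\<lambda>y. \<Sum>i\<in>UNIV. dir_deriv (ee i) (chr2 a k l i) y - dir_deriv (ee k) (chr2 a i l i) y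
   + (\<Sum>p\<in>UNIV. chr2 a k l p y * chr2 a i p i y - chr2 a i l p y * chr2 a k p i y))"
  by (simp add: ric_graph_def Ric_def Riem31_def chr2_def pdx_dd fun_eq_iff)

lemma ric_graph_Alg[intro]: "ric_graph a k l \<in> sp.Alg a"
  unfolding ric_graph_eq
  by (intro sp.Alg_sum sp.Alg_add sp.Alg_diff sp.Alg_mult sp.Alg_dir_deriv chr2_Alg) simp_all

lemma grad_f_0[simp]: "grad_f a k 0 = 0"
  by (simp add: grad_f_def)

lemma dir_deriv_grad_f_0: "dir_deriv v (grad_f a k) 0 = 0"
proof (rule dir_deriv_eqI)
  have "((\<lambda>s. (\<Sum>q\<in>UNIV. a k q * (s * v $ q)\<^sup>2) + 2 * (s * v $ k) * (\<Sum>r\<in>UNIV. a r k * (s * v $ r)))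
     has_real_derivative 0) (at 0)"
    by (auto intro!: derivative_eq_intros)
  then show "((\<lambda>s. grad_f a k (0 + s *\<^sub>R v)) has_real_derivative 0) (at 0)"
    by (simp add: grad_f_def)
qed

lemma grad_f_vanishes: "sp.vanishes (grad_f a k) 2"
  unfolding sp.vanishes_def
proof (intro allI impI)
  fix vs :: "(real^'a) list" assume "length vs < 2"
  then have "vs = [] \<or> (\<exists>v. vs = [v])"
    by (cases vs) auto
  then show "dir_derivs vs (grad_f a k) 0 = 0" using dir_deriv_grad_f_0 by auto
qed

definition grad_f_deriv :: "('n::finite \<Rightarrow> 'n \<Rightarrow> real) \<Rightarrow> 'n \<Rightarrow> real^'n \<Rightarrow> real^'n \<Rightarrow> real" where
  "grad_f_deriv a k v y = (\<Sum>q\<in>UNIV. a k q * (2 * y $ q * v $ q)) + 2 * v $ k * (\<Sum>r\<in>UNIV. a r k * y $ r)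
     + 2 * y $ k * (\<Sum>r\<in>UNIV. a r k * v $ r)"

lemma dir_deriv_grad_f: "dir_deriv v (grad_f a k) y = grad_f_deriv a k v y"
proof (rule dir_deriv_eqI)
  have "((\<lambda>s. (\<Sum>q\<in>UNIV. a k q * (y $ q + s * v $ q)\<^sup>2) + 2 * (y $ k + s * v $ k) * (\<Sum>r\<in>UNIV. a r k * (y $ r + s * v $ r)))
     has_real_derivative
      (\<Sum>q\<in>UNIV. a k q * (2 * (y $ q + 0 * v $ q) * v $ q)) + (2 * v $ k * (\<Sum>r\<in>UNIV. a r k * (y $ r + 0 * v $ r))
     + 2 * (y $ k + 0 * v $ k) * (\<Sum>r\<in>UNIV. a r k * v $ r))) (at 0)"
    by (auto intro!: derivative_eq_intros simp: algebra_simps)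
  then show "((\<lambda>s. grad_f a k (y + s *\<^sub>R v)) has_real_derivative grad_f_deriv a k v y) (at 0)"
    by (simp add: grad_f_def grad_f_deriv_def algebra_simps)
qed

lemma dir_deriv_grad_f_deriv: "dir_deriv w (grad_f_deriv a k v) y = (\<Sum>q\<in>UNIV. a k q * (2 * w $ q * v $ q)) + 2 * v $ k * (\<Sum>r\<in>UNIV. a r k * w $ r)
     + 2 * w $ k * (\<Sum>r\<in>UNIV. a r k * v $ r)"
proof (rule dir_deriv_eqI)
  have "((\<lambda>s. (\<Sum>q\<in>UNIV. a k q * (2 * (y $ q + s * w $ q) * v $ q)) + 2 * v $ k * (\<Sum>r\<in>UNIV. a r k * (y $ r + s * w $ r))
     + 2 * (y $ k + s * w $ k) * (\<Sum>r\<in>UNIV. a r k * v $ r))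
     has_real_derivative
      (\<Sum>q\<in>UNIV. a k q * (2 * w $ q * v $ q)) + 2 * v $ k * (\<Sum>r\<in>UNIV. a r k * w $ r)
     + 2 * w $ k * (\<Sum>r\<in>UNIV. a r k * v $ r)) (at 0)"
    by (auto intro!: derivative_eq_intros simp: algebra_simps)
  then show "((\<lambda>s. grad_f_deriv a k v (y + s *\<^sub>R w)) has_real_derivative
      (\<Sum>q\<in>UNIV. a k q * (2 * w $ q * v $ q)) + 2 * v $ k * (\<Sum>r\<in>UNIV. a r k * w $ r)
     + 2 * w $ k * (\<Sum>r\<in>UNIV. a r k * v $ r)) (at 0)"
    by (simp add: grad_f_deriv_def algebra_simps)
qed

lemma second_deriv_grad_f: "dir_derivs [ee p, ee q] (grad_f a k) 0 = f3 a k p q"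
proof -
  have "dir_derivs [ee p, ee q] (grad_f a k) 0 = dir_deriv (ee p) (grad_f_deriv a k (ee q)) 0"
    by (simp add: dir_deriv_grad_f[abs_def] grad_f_deriv_def[abs_def])
  also have "\<dots> = f3 a k p q"
  proof -
    have 1: "(\<Sum>x\<in>UNIV. a k x * (2 * ee p $ x * ee q $ x)) = (2 * a k p * (if p = q then 1 else 0))"
    proof -
      have "(\<Sum>x\<in>UNIV. a k x * (2 * ee p $ x * ee q $ x)) =
          (\<Sum>x\<in>UNIV. (2 * a k x * (if x = q then 1 else 0)) * (if x = p then 1 else 0))"
        by (rule sum.cong) (auto simp: axis_nth1)
      then show ?thesis by (simp add: sum_mult_delta)
    qed
    have 2: "(\<Sum>r\<in>UNIV. a r k * ee p $ r) = a p k" for p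
      unfolding axis_nth1 by (rule sum_mult_delta)
    show ?thesis unfolding dir_deriv_grad_f_deriv 1 2 by (cases "p = q") (auto simp: f3_def axis_nth1)
  qed
  finally show ?thesis .
qed

lemma gpert_vanishes: "sp.vanishes (gpert a i j) 4"
proof -
  have "sp.vanishes (\<lambda>x. grad_f a i x * grad_f a j x) (2 + 2)"
    by (rule sp.vanishes_mult[OF grad_f_Alg grad_f_Alg grad_f_vanishes grad_f_vanishes])
  then show ?thesis by (simp add: gpert_def)
qed

lemma gentry_gpert: "gentry a i j = (\<lambda>y. (if i = j then 1 else 0) + gpert a i j y)"
  by (simp add: gentry_def gmat_def gpert_def fun_eq_iff)

lemma dir_deriv_gentry: "dir_deriv v (gentry a i j) = dir_deriv v (gpert a i j)"
  unfolding gentry_gpert sp.dir_deriv_fun_add[where a=a, OF sp.Alg_const gpert_Alg] sp.dir_deriv_fun_const by simp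

lemma chr1_gpert: "chr1 a j k l = (\<lambda>y. dir_deriv (ee j) (gpert a k l) y + dir_deriv (ee k) (gpert a j l) y - dir_deriv (ee l) (gpert a j k) y)"
  unfolding chr1_def dir_deriv_gentry ..

lemma dir_deriv_gpert_Alg[intro]: "dir_deriv v (gpert a i j) \<in> sp.Alg a"
  by (intro sp.Alg_dir_deriv gpert_Alg)

lemma chr1_vanishes: "sp.vanishes (chr1 a j k l) 3"
proof -
  have o: "sp.vanishes (dir_deriv v (gpert a i j)) 3" for v i j
    using sp.vanishes_dir_deriv[OF gpert_vanishes[of a i j], where v=v] by simp
  show ?thesis unfolding chr1_gpert
    by (intro sp.vanishes_add[where a=a] sp.vanishes_diff[where a=a] sp.Alg_add dir_deriv_gpert_Alg o)
qed

text \<open>\<open>ginv - \<delta> = - ginv gpert\<close> also vanishes to order 4.\<close>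

definition ginv_pert :: "('n::finite \<Rightarrow> 'n \<Rightarrow> real) \<Rightarrow> 'n \<Rightarrow> 'n \<Rightarrow> real^'n \<Rightarrow> real" where
  "ginv_pert a m l = (\<lambda>y. ginv a m l y - (if m = l then 1 else 0))"

lemma ginv_pert_Alg[intro]: "ginv_pert a m l \<in> sp.Alg a"
  unfolding ginv_pert_def by (intro sp.Alg_diff ginv_Alg sp.Alg_const)

lemma ginv_gmat: "(\<Sum>j\<in>UNIV. ginv a m j y * gmat a y $ j $ l) = (if m = l then 1 else 0)"
proof -
  have "matrix_inv (gmat a y) ** gmat a y = mat 1" using matrix_inv_props[OF det_gmat_nonzero] by blast
  then have "(matrix_inv (gmat a y) ** gmat a y) $ m $ l = mat 1 $ m $ l" by simp
  then show ?thesis by (simp add: matrix_matrix_mult_def ginv_def mat_def)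
qed

lemma ginv_pert_eq: "ginv_pert a m l = (\<lambda>y. - (\<Sum>j\<in>UNIV. ginv a m j y * gpert a j l y))"
proof (rule ext)
  fix y
  have "(\<Sum>j\<in>UNIV. ginv a m j y * gmat a y $ j $ l) =
      (\<Sum>j\<in>UNIV. ginv a m j y * (if j = l then 1 else 0)) + (\<Sum>j\<in>UNIV. ginv a m j y * gpert a j l y)"
    by (simp add: gmat_def gpert_def sum.distrib algebra_simps)
  then have "(if m = l then 1 else 0) = ginv a m l y + (\<Sum>j\<in>UNIV. ginv a m j y * gpert a j l y)"
    unfolding ginv_gmat sum_mult_delta .
  then show "ginv_pert a m l y = - (\<Sum>j\<in>UNIV. ginv a m j y * gpert a j l y)"
    by (simp add: ginv_pert_def)
qed

lemma ginv_pert_vanishes: "sp.vanishes (ginv_pert a m l) 4"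
proof -
  have "sp.vanishes (\<lambda>y. ginv a m j y * gpert a j l y) (0 + 4)" for j
    by (rule sp.vanishes_mult[OF ginv_Alg gpert_Alg sp.vanishes_0 gpert_vanishes])
  then have "sp.vanishes (\<lambda>y. (- 1) * (\<Sum>j\<in>UNIV. ginv a m j y * gpert a j l y)) 4"
    by (intro sp.vanishes_cmult[where a=a] sp.Alg_sum sp.vanishes_sum[where a=a] sp.Alg_mult ginv_Alg gpert_Alg) auto
  then show ?thesis unfolding ginv_pert_eq by simp
qed

definition chr2_rest :: "('n::finite \<Rightarrow> 'n \<Rightarrow> real) \<Rightarrow> 'n \<Rightarrow> 'n \<Rightarrow> 'n \<Rightarrow> real^'n \<Rightarrow> real" where
  "chr2_rest a j k m = (\<lambda>y. 1 / 2 * (\<Sum>l\<in>UNIV. ginv_pert a m l y * chr1 a j k l y))"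

lemma chr2_rest_Alg[intro]: "chr2_rest a j k m \<in> sp.Alg a"
  unfolding chr2_rest_def by (intro sp.Alg_cmult sp.Alg_sum sp.Alg_mult ginv_pert_Alg chr1_Alg) simp_all

lemma chr2_rest_vanishes: "sp.vanishes (chr2_rest a j k m) 7"
proof -
  have "sp.vanishes (\<lambda>y. ginv_pert a m l y * chr1 a j k l y) 7" for l
    using sp.vanishes_mult[OF ginv_pert_Alg chr1_Alg ginv_pert_vanishes[of a m l] chr1_vanishes[of a j k l]] by simp
  then show ?thesis unfolding chr2_rest_def
    by (intro sp.vanishes_cmult[where a=a] sp.Alg_sum sp.vanishes_sum[where a=a] sp.Alg_mult ginv_pert_Alg chr1_Alg) auto
qed

lemma chr2_split: "chr2 a j k m = (\<lambda>y. 1 / 2 * chr1 a j k m y + chr2_rest a j k m y)"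
proof (rule ext)
  fix y
  have "(\<Sum>l\<in>UNIV. ginv a m l y * chr1 a j k l y) =
     (\<Sum>l\<in>UNIV. chr1 a j k l y * (if l = m then 1 else 0) + ginv_pert a m l y * chr1 a j k l y)"
    by (rule sum.cong) (auto simp: ginv_pert_def algebra_simps)
  also have "\<dots> = (\<Sum>l\<in>UNIV. chr1 a j k l y * (if l = m then 1 else 0)) + (\<Sum>l\<in>UNIV. ginv_pert a m l y * chr1 a j k l y)"
    by (rule sum.distrib)
  finally have "(\<Sum>l\<in>UNIV. ginv a m l y * chr1 a j k l y) =
     (\<Sum>l\<in>UNIV. chr1 a j k l y * (if l = m then 1 else 0)) + (\<Sum>l\<in>UNIV. ginv_pert a m l y * chr1 a j k l y)" .
  then show "chr2 a j k m y = 1 / 2 * chr1 a j k m y + chr2_rest a j k m y"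
    unfolding chr2_eq chr2_rest_def sum_mult_delta by (simp add: algebra_simps)
qed

lemma chr2_vanishes: "sp.vanishes (chr2 a j k m) 3"
proof -
  have "sp.vanishes (\<lambda>y. ginv a m l y * chr1 a j k l y) (0 + 3)" for l
    by (rule sp.vanishes_mult[OF ginv_Alg chr1_Alg sp.vanishes_0 chr1_vanishes])
  then show ?thesis unfolding chr2_eq
    by (intro sp.vanishes_cmult[where a=a] sp.Alg_sum sp.vanishes_sum[where a=a] sp.Alg_mult ginv_Alg chr1_Alg) auto
qed

lemma gmat_0: "gmat a 0 = mat 1"
  by (simp add: gmat_def mat_def vec_eq_iff)

lemma dir_deriv_gentry_0: "dir_deriv v (gentry a k l) 0 = 0"
  unfolding dir_deriv_gentry using sp.vanishesD[OF gpert_vanishes, of "[v]"] by simp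

lemma dir_deriv2_gentry_0: "dir_deriv u (dir_deriv v (gentry a k l)) 0 = 0"
  unfolding dir_deriv_gentry using sp.vanishesD[OF gpert_vanishes, of "[u, v]"] by simp

lemma ginv_split: "ginv a m l = (\<lambda>y. (if m = l then 1 else 0) + ginv_pert a m l y)"
  by (simp add: ginv_pert_def fun_eq_iff)

lemma ginv_0: "ginv a m l 0 = (if m = l then 1 else 0)"
  using sp.vanishesD[OF ginv_pert_vanishes, of "[]"] by (simp add: ginv_split)

lemma dir_deriv_ginv_0: "dir_deriv v (ginv a m l) 0 = 0"
  unfolding ginv_split sp.dir_deriv_fun_add[where a=a, OF sp.Alg_const ginv_pert_Alg] sp.dir_deriv_fun_const
  using sp.vanishesD[OF ginv_pert_vanishes, of "[v]"] by simp

lemma chr2_0: "chr2 a j k m 0 = 0"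
  using sp.vanishesD[OF chr2_vanishes, of "[]"] by simp

lemma dir_deriv_chr2_0: "dir_deriv v (chr2 a j k m) 0 = 0"
  using sp.vanishesD[OF chr2_vanishes, of "[v]"] by simp

lemma Riem31_graph_family_0: "Riem31 (graph_family a) 0 0 i j k m = 0"
proof -
  have c: "Christoffel (graph_family a) 0 0 j k m = 0" for j k m using chr2_0[of a j k m] by (simp add: chr2_def)
  show ?thesis by (simp add: Riem31_def chr2_def[symmetric] pdx_dd c dir_deriv_chr2_0)
qed

definition gpert4 :: "('n::finite \<Rightarrow> 'n \<Rightarrow> real) \<Rightarrow> 'n \<Rightarrow> 'n \<Rightarrow> 'n \<Rightarrow> 'n \<Rightarrow> 'n \<Rightarrow> 'n \<Rightarrow> real" where
  "gpert4 a k m p1 p2 p3 p4 = f3 a k p3 p4 * f3 a m p1 p2 + f3 a k p2 p4 * f3 a m p1 p3 + f3 a k p1 p4 * f3 a m p2 p3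
     + f3 a k p2 p3 * f3 a m p1 p4 + f3 a k p1 p3 * f3 a m p2 p4 + f3 a k p1 p2 * f3 a m p3 p4"

lemma gpert_fourth_deriv: "dir_derivs [ee p1, ee p2, ee p3, ee p4] (gpert a k m) 0 = gpert4 a k m p1 p2 p3 p4"
  unfolding gpert_def sp.fourth_deriv_product[OF grad_f_Alg grad_f_vanishes grad_f_Alg grad_f_vanishes] second_deriv_grad_f gpert4_def ..

definition chr1_3 :: "('n::finite \<Rightarrow> 'n \<Rightarrow> real) \<Rightarrow> 'n \<Rightarrow> 'n \<Rightarrow> 'n \<Rightarrow> 'n \<Rightarrow> 'n \<Rightarrow> 'n \<Rightarrow> real" where
  "chr1_3 a p1 p2 p3 j k m = gpert4 a k m p1 p2 p3 j + gpert4 a j m p1 p2 p3 k - gpert4 a j k p1 p2 p3 m"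

lemma chr1_third_deriv: "dir_derivs [ee p1, ee p2, ee p3] (chr1 a j k m) 0 = chr1_3 a p1 p2 p3 j k m"
proof -
  have "dir_derivs [ee p1, ee p2, ee p3] (chr1 a j k m) =
     (\<lambda>y. dir_derivs [ee p1, ee p2, ee p3] (\<lambda>y. dir_deriv (ee j) (gpert a k m) y + dir_deriv (ee k) (gpert a j m) y) y
        - dir_derivs [ee p1, ee p2, ee p3] (dir_deriv (ee m) (gpert a j k)) y)"
    unfolding chr1_gpert by (rule sp.dir_derivs_diff[where a=a]) auto
  also have "\<dots> = (\<lambda>y. dir_derivs [ee p1, ee p2, ee p3] (dir_deriv (ee j) (gpert a k m)) y
        + dir_derivs [ee p1, ee p2, ee p3] (dir_deriv (ee k) (gpert a j m)) y
        - dir_derivs [ee p1, ee p2, ee p3] (dir_deriv (ee m) (gpert a j k)) y)"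
    by (subst sp.dir_derivs_add[where a=a]) auto
  finally have "dir_derivs [ee p1, ee p2, ee p3] (chr1 a j k m) 0 =
      dir_derivs [ee p1, ee p2, ee p3, ee j] (gpert a k m) 0 + dir_derivs [ee p1, ee p2, ee p3, ee k] (gpert a j m) 0
      - dir_derivs [ee p1, ee p2, ee p3, ee m] (gpert a j k) 0"
    by simp
  then show ?thesis unfolding gpert_fourth_deriv chr1_3_def .
qed

text \<open>The remainder does not contribute to the third derivatives of the Christoffel symbols.\<close>

lemma chr2_third_deriv: "dir_derivs [ee p1, ee p2, ee p3] (chr2 a j k m) 0 = 1 / 2 * chr1_3 a p1 p2 p3 j k m"
proof -
  have "dir_derivs [ee p1, ee p2, ee p3] (chr2 a j k m) =
     (\<lambda>y. dir_derivs [ee p1, ee p2, ee p3] (\<lambda>y. 1 / 2 * chr1 a j k m y) y + dir_derivs [ee p1, ee p2, ee p3] (chr2_rest a j k m) y)"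
    unfolding chr2_split by (rule sp.dir_derivs_add[where a=a, OF sp.Alg_cmult[OF chr1_Alg] chr2_rest_Alg])
  also have "\<dots> = (\<lambda>y. 1 / 2 * dir_derivs [ee p1, ee p2, ee p3] (chr1 a j k m) y + dir_derivs [ee p1, ee p2, ee p3] (chr2_rest a j k m) y)"
    by (subst sp.dir_derivs_cmult[where a=a]) auto
  finally have "dir_derivs [ee p1, ee p2, ee p3] (chr2 a j k m) 0 =
      1 / 2 * dir_derivs [ee p1, ee p2, ee p3] (chr1 a j k m) 0 + dir_derivs [ee p1, ee p2, ee p3] (chr2_rest a j k m) 0"
    by simp
  moreover have "dir_derivs [ee p1, ee p2, ee p3] (chr2_rest a j k m) 0 = 0"
    by (rule sp.vanishesD[OF chr2_rest_vanishes]) simp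
  ultimately show ?thesis unfolding chr1_third_deriv by simp
qed

text \<open>Second derivatives of the Ricci tensor at the origin: the quadratic terms vanish to
  order 6, so only third derivatives of the Christoffel symbols contribute.\<close>

definition ric_2 :: "('n::finite \<Rightarrow> 'n \<Rightarrow> real) \<Rightarrow> 'n \<Rightarrow> 'n \<Rightarrow> 'n \<Rightarrow> 'n \<Rightarrow> real" where
  "ric_2 a k l p1 p2 = (\<Sum>i\<in>UNIV. 1 / 2 * chr1_3 a p1 p2 i k l i - 1 / 2 * chr1_3 a p1 p2 k i l i)"

lemma ric_graph_second_deriv: "dir_derivs [ee p1, ee p2] (ric_graph a k l) 0 = ric_2 a k l p1 p2"
proof -
  define T1 where "T1 i = dir_deriv (ee i) (chr2 a k l i)" for i
  define T2 where "T2 i = dir_deriv (ee k) (chr2 a i l i)" for i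
  define T3 where "T3 i = (\<lambda>y. \<Sum>p\<in>UNIV. chr2 a k l p y * chr2 a i p i y - chr2 a i l p y * chr2 a k p i y)" for i
  have S1: "T1 i \<in> sp.Alg a" "T2 i \<in> sp.Alg a" for i unfolding T1_def T2_def by auto
  have S3: "T3 i \<in> sp.Alg a" for i unfolding T3_def by (intro sp.Alg_sum sp.Alg_diff sp.Alg_mult chr2_Alg) auto
  have o6: "sp.vanishes (T3 i) 6" for i
  proof -
    have "sp.vanishes (\<lambda>y. chr2 a k l p y * chr2 a i p i y) (3 + 3)" "sp.vanishes (\<lambda>y. chr2 a i l p y * chr2 a k p i y) (3 + 3)" for p
      by (rule sp.vanishes_mult[OF chr2_Alg chr2_Alg chr2_vanishes chr2_vanishes])+
    then show ?thesis unfolding T3_def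
      by (intro sp.vanishes_sum[where a=a] sp.vanishes_diff[where a=a] sp.Alg_diff sp.Alg_mult chr2_Alg) auto
  qed
  have R: "ric_graph a k l = (\<lambda>y. \<Sum>i\<in>UNIV. T1 i y - T2 i y + T3 i y)"
    unfolding ric_graph_eq T1_def T2_def T3_def ..
  have "dir_derivs [ee p1, ee p2] (ric_graph a k l) = (\<lambda>y. \<Sum>i\<in>UNIV. dir_derivs [ee p1, ee p2] (\<lambda>y. T1 i y - T2 i y + T3 i y) y)"
    unfolding R by (rule sp.dir_derivs_sum[where a=a]) (simp, intro sp.Alg_add sp.Alg_diff S1 S3)
  also have "\<dots> = (\<lambda>y. \<Sum>i\<in>UNIV. dir_derivs [ee p1, ee p2] (T1 i) y - dir_derivs [ee p1, ee p2] (T2 i) y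
       + dir_derivs [ee p1, ee p2] (T3 i) y)"
  proof -
    have e: "dir_derivs vs (\<lambda>y. T1 i y - T2 i y + T3 i y) = (\<lambda>y. dir_derivs vs (T1 i) y - dir_derivs vs (T2 i) y + dir_derivs vs (T3 i) y)" for vs i
      unfolding sp.dir_derivs_add[where a=a, OF sp.Alg_diff[OF S1] S3] sp.dir_derivs_diff[where a=a, OF S1] ..
    show ?thesis unfolding e ..
  qed
  finally have "dir_derivs [ee p1, ee p2] (ric_graph a k l) 0 = (\<Sum>i\<in>UNIV. dir_derivs [ee p1, ee p2] (T1 i) 0 - dir_derivs [ee p1, ee p2] (T2 i) 0
       + dir_derivs [ee p1, ee p2] (T3 i) 0)" by simp
  also have "\<dots> = (\<Sum>i\<in>UNIV. dir_derivs [ee p1, ee p2, ee i] (chr2 a k l i) 0 - dir_derivs [ee p1, ee p2, ee k] (chr2 a i l i) 0)"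
    using sp.vanishesD[OF o6, of "[ee p1, ee p2]"] by (simp add: T1_def T2_def)
  also have "\<dots> = ric_2 a k l p1 p2"
    unfolding chr2_third_deriv ric_2_def ..
  finally show ?thesis .
qed

text \<open>Symmetry of mixed partial derivatives for \<open>ric_2\<close>.\<close>

lemma ric_2_sym: "ric_2 a x y p q = ric_2 a x y q p"
  using ric_graph_second_deriv[of p q a x y] ric_graph_second_deriv[of q p a x y] sp.dir_deriv_commute[OF ric_graph_Alg, of 0 "ee p" "ee q"] by simp

section \<open>The curvature derivative formula and its values\<close>

lemma f3_sym1: "f3 a k p q = f3 a k q p"
  by (auto simp: f3_def)

lemma f3_sym2: "f3 a k p q = f3 a p k q"
  by (auto simp: f3_def)

lemma ric_2_summand: "1 / 2 * chr1_3 a p q x k l x - 1 / 2 * chr1_3 a p q k x l x =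
   f3 a k l p * f3 a q x x + f3 a k l q * f3 a p x x - f3 a k p x * f3 a l q x - f3 a k q x * f3 a l p x"
  unfolding chr1_3_def gpert4_def
  by (simp only: f3_sym1[of a] f3_sym2[of a] mult.commute) (simp only: ring_distribs)

text \<open>The time derivative of \<open>R\<^sub>i\<^sub>j\<^sub>k\<^sub>l\<close> at the origin, as a combination of second derivatives of the
  Ricci tensor; it is a contraction of two copies of \<open>f3\<close>.\<close>

definition dRm :: "('n::finite \<Rightarrow> 'n \<Rightarrow> real) \<Rightarrow> 'n \<Rightarrow> 'n \<Rightarrow> 'n \<Rightarrow> 'n \<Rightarrow> real" where
  "dRm a i j k l = - (ric_2 a j l i k - ric_2 a j k i l - ric_2 a i l j k + ric_2 a i k j l)"

lemma dRm_eq: "dRm a i j k l = 2 * (\<Sum>x\<in>UNIV. f3 a j k x * f3 a i l x - f3 a i k x * f3 a j l x)"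
proof -
  have "dRm a i j k l = (\<Sum>x\<in>UNIV. - (
      (f3 a j l i * f3 a k x x + f3 a j l k * f3 a i x x - f3 a j i x * f3 a l k x - f3 a j k x * f3 a l i x)
    - (f3 a j k i * f3 a l x x + f3 a j k l * f3 a i x x - f3 a j i x * f3 a k l x - f3 a j l x * f3 a k i x)
    - (f3 a i l j * f3 a k x x + f3 a i l k * f3 a j x x - f3 a i j x * f3 a l k x - f3 a i k x * f3 a l j x)
    + (f3 a i k j * f3 a l x x + f3 a i k l * f3 a j x x - f3 a i j x * f3 a k l x - f3 a i l x * f3 a k j x)))"
    unfolding dRm_def ric_2_def ric_2_summand sum_subtractf[symmetric] sum.distrib[symmetric] sum_negf ..
  also have "\<dots> = (\<Sum>x\<in>UNIV. 2 * (f3 a j k x * f3 a i l x - f3 a i k x * f3 a j l x))"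
  proof (rule sum.cong[OF refl])
    fix x
    show "- ((f3 a j l i * f3 a k x x + f3 a j l k * f3 a i x x - f3 a j i x * f3 a l k x - f3 a j k x * f3 a l i x)
    - (f3 a j k i * f3 a l x x + f3 a j k l * f3 a i x x - f3 a j i x * f3 a k l x - f3 a j l x * f3 a k i x)
    - (f3 a i l j * f3 a k x x + f3 a i l k * f3 a j x x - f3 a i j x * f3 a l k x - f3 a i k x * f3 a l j x)
    + (f3 a i k j * f3 a l x x + f3 a i k l * f3 a j x x - f3 a i j x * f3 a k l x - f3 a i l x * f3 a k j x))
      = 2 * (f3 a j k x * f3 a i l x - f3 a i k x * f3 a j l x)"
      by (simp only: f3_sym1[of a] f3_sym2[of a] mult.commute) (simp only: ring_distribs)
  qed
  finally show ?thesis by (simp add: sum_distrib_left)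
qed

definition kron :: "'a \<Rightarrow> 'a \<Rightarrow> real" where "kron p q = (if p = q then 1 else 0)"

lemma kron_same[simp]: "kron p p = 1" by (simp add: kron_def)
lemma kron_ne[simp]: "p \<noteq> q \<Longrightarrow> kron p q = 0" by (simp add: kron_def)
lemma kron_ne'[simp]: "q \<noteq> p \<Longrightarrow> kron p q = 0" by (simp add: kron_def)

lemma f3_kron: "f3 a u v x = 2 * (a u v * kron x v + a v u * kron x u + a x u * kron u v)"
  by (auto simp: f3_def kron_def)

lemma sum_kron_kron: "(\<Sum>x\<in>UNIV. (c * kron x p) * (d * kron x q)) = c * d * kron p (q::'n::finite)"
proof -
  have "(\<Sum>x\<in>UNIV. (c * kron x p) * (d * kron x q)) = (\<Sum>x\<in>UNIV. if x = p then c * d * kron p q else 0)"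
    by (rule sum.cong) (auto simp: kron_def)
  then show ?thesis by simp
qed

lemma sum_kron_left: "(\<Sum>x\<in>UNIV. (c * kron x p) * (f x * e)) = c * f p * (e::real)" for p :: "'n::finite"
proof -
  have "(\<Sum>x\<in>UNIV. (c * kron x p) * (f x * e)) = (\<Sum>x\<in>UNIV. if x = p then c * f p * e else 0)"
    by (rule sum.cong) (auto simp: kron_def)
  then show ?thesis by simp
qed

lemma sum_kron_right: "(\<Sum>x\<in>UNIV. (f x * e) * (c * kron x p)) = c * f p * (e::real)" for p :: "'n::finite"
proof -
  have "(\<Sum>x\<in>UNIV. (f x * e) * (c * kron x p)) = (\<Sum>x\<in>UNIV. if x = p then c * f p * e else 0)"
    by (rule sum.cong) (auto simp: kron_def)
  then show ?thesis by simp
qed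

lemma sum_scaled_product: "(\<Sum>x\<in>UNIV. (f x * e) * (h x * e')) = e * e' * (\<Sum>x\<in>UNIV. f x * h x :: real)"
  by (simp add: sum_distrib_left algebra_simps)

text \<open>\<open>f3_pair a u v w z = \<Sum>\<^sub>x f3 u v x f3 w z x / 4\<close> in closed form.\<close>

definition f3_pair :: "('n::finite \<Rightarrow> 'n \<Rightarrow> real) \<Rightarrow> 'n \<Rightarrow> 'n \<Rightarrow> 'n \<Rightarrow> 'n \<Rightarrow> real" where
  "f3_pair a u v w z =
     a u v * a w z * kron v z + a u v * a z w * kron v w + a u v * a v w * kron w z
   + a v u * a w z * kron u z + a v u * a z w * kron u w + a v u * a u w * kron w z
   + a z u * a w z * kron u v + a w u * a z w * kron u v + kron u v * kron w z * (\<Sum>x\<in>UNIV. a x u * a x w)"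

lemma f3_pair_sum: "(\<Sum>x\<in>UNIV. f3 a u v x * f3 a w z x) = 4 * f3_pair a u v w z"
proof -
  have "(\<Sum>x\<in>UNIV. f3 a u v x * f3 a w z x) = 4 * (\<Sum>x\<in>UNIV.
      ((a u v * kron x v) * (a w z * kron x z) + (a u v * kron x v) * (a z w * kron x w) + (a u v * kron x v) * (a x w * kron w z))
    + ((a v u * kron x u) * (a w z * kron x z) + (a v u * kron x u) * (a z w * kron x w) + (a v u * kron x u) * (a x w * kron w z))
    + ((a x u * kron u v) * (a w z * kron x z) + (a x u * kron u v) * (a z w * kron x w) + (a x u * kron u v) * (a x w * kron w z)))"
    unfolding f3_kron sum_distrib_left by (rule sum.cong) (simp_all add: algebra_simps)
  also have "\<dots> = 4 * f3_pair a u v w z"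
    unfolding sum.distrib sum_kron_kron sum_kron_left sum_kron_right sum_scaled_product f3_pair_def by (simp add: algebra_simps)
  finally show ?thesis .
qed

lemma dRm_f3_pair: "dRm a i j k l = 8 * (f3_pair a j k i l - f3_pair a i k j l)"
  unfolding dRm_eq sum_subtractf f3_pair_sum by simp

lemma dRm_anti1: "dRm a i j k l = - dRm a j i k l"
  unfolding dRm_eq by (simp add: sum_subtractf algebra_simps)

lemma dRm_anti2: "dRm a i j k l = - dRm a i j l k"
  unfolding dRm_eq by (simp add: sum_subtractf algebra_simps)

lemma dRm_ii: "dRm a i i k l = 0"
  using dRm_anti1[of a i i k l] by simp

lemma dRm_kk: "dRm a i j k k = 0"
  using dRm_anti2[of a i j k k] by simp

lemma dRm_distinct: "distinct [i, j, k, l] \<Longrightarrow> dRm a i j k l = 0"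
  by (simp add: dRm_f3_pair f3_pair_def)

lemma dRm_jk: "distinct [i, j, l] \<Longrightarrow>
    dRm a i j j l = 8 * (a i l * a l j + a l i * a i j) - 8 * a i j * a l j"
  by (simp add: dRm_f3_pair f3_pair_def algebra_simps)

lemma dRm_lj: "distinct [i, k, j] \<Longrightarrow>
    dRm a i j k j = 8 * a i j * a k j - 8 * (a i k * a k j + a k i * a i j)"
  by (simp add: dRm_f3_pair f3_pair_def algebra_simps)

lemma dRm_ik: "distinct [i, j, l] \<Longrightarrow>
    dRm a i j i l = 8 * a l i * a j i - 8 * (a j l * a l i + a l j * a j i)"
  by (simp add: dRm_f3_pair f3_pair_def algebra_simps)

lemma dRm_ijij:
  assumes ij: "i \<noteq> j"
  shows "dRm a i j i j = 8 * ((a i j)^2 + (a j i)^2)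
    - 8 * ((\<Sum>q\<in>UNIV - {i, j}. a q i * a q j) + 3 * a i i * a i j + 3 * a j j * a j i)"
proof -
  have "(\<Sum>q\<in>UNIV. a q i * a q j) = (\<Sum>q\<in>UNIV - {i, j}. a q i * a q j) + (\<Sum>q\<in>{i, j}. a q i * a q j)"
    by (rule sum.subset_diff) auto
  then have "(\<Sum>q\<in>UNIV. a q i * a q j) = a i i * a i j + a j i * a j j + (\<Sum>q\<in>UNIV - {i, j}. a q i * a q j)"
    using ij by simp
  then show ?thesis
    using ij unfolding dRm_f3_pair f3_pair_def by (simp add: algebra_simps power2_eq_square)
qed

text \<open>Under the algebraic condition of the paper all components with \<open>{i, j} \<noteq> {k, l}\<close>
  vanish: up to the antisymmetries they are either the totally distinct case or the case
  \<open>dRm a p q q r\<close> with distinct \<open>p, q, r\<close>, which is the condition itself.\<close>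

lemma dRm_cond:
  assumes cond: "\<forall>\<alpha> \<beta> \<gamma>. distinct [\<alpha>, \<beta>, \<gamma>] \<longrightarrow> a \<alpha> \<beta> * a \<beta> \<gamma> + a \<beta> \<alpha> * a \<alpha> \<gamma> = a \<alpha> \<gamma> * a \<beta> \<gamma>"
    and ne: "{i, j} \<noteq> {k, l}"
  shows "dRm a i j k l = 0"
proof -
  have three: "dRm a p q q r = 0" if d: "distinct [p, q, r]" for p q r
  proof -
    have "a p r * a r q + a r p * a p q = a p q * a r q" using cond d by auto
    then show ?thesis by (simp add: dRm_jk[OF d])
  qed
  consider "i = j" | "k = l" | "distinct [i, j, k, l]" | "j = k" "distinct [i, j, l]"
    | "j = l" "distinct [i, j, k]" | "i = k" "distinct [j, i, l]" | "i = l" "distinct [j, i, k]"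
    using ne by auto
  then show ?thesis
  proof cases
    case 1 then show ?thesis by (simp add: dRm_ii)
  next
    case 2 then show ?thesis by (simp add: dRm_kk)
  next
    case 3 then show ?thesis by (rule dRm_distinct)
  next
    case 4 then show ?thesis using three by simp
  next
    case 5 then show ?thesis using dRm_anti2[of a i j k j] three[of i j k] by simp
  next
    case 6 then show ?thesis using dRm_anti1[of a i j i l] three[of j i l] by simp
  next
    case 7 then show ?thesis
      using dRm_anti1[of a i j k i] dRm_anti2[of a j i k i] three[of j i k] by simp
  qed
qed

lemma dRm_cases:
  fixes a :: "'n::{finite,linorder} \<Rightarrow> 'n \<Rightarrow> real"
  shows "(\<forall>i j k l. i < j \<and> k < l \<and> i \<le> k \<and> distinct [i, j, k, l] \<longrightarrow> dRm a i j k l = 0)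
    \<and> (\<forall>i j k l. i < k \<and> k = j \<and> j < l \<longrightarrow>
          dRm a i j k l = 8 * (a i l * a l j + a l i * a i j) - 8 * a i j * a l j)
    \<and> (\<forall>i j k l. i < k \<and> k < l \<and> l = j \<longrightarrow>
          dRm a i j k l = 8 * a i j * a k j - 8 * (a i k * a k j + a k i * a i j))
    \<and> (\<forall>i j k l. i < j \<and> k < l \<and> i = k \<and> j \<noteq> l \<longrightarrow>
          dRm a i j k l = 8 * a l i * a j i - 8 * (a j l * a l i + a l j * a j i))
    \<and> (\<forall>i j k l. i < j \<and> i = k \<and> j = l \<longrightarrow>
          dRm a i j k l = 8 * ((a i j)^2 + (a j i)^2)
            - 8 * ((\<Sum>q\<in>UNIV - {i, j}. a q i * a q j) + 3 * a i i * a i j + 3 * a j j * a j i))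
    \<and> ((\<forall>\<alpha> \<beta> \<gamma>. distinct [\<alpha>, \<beta>, \<gamma>] \<longrightarrow>
           a \<alpha> \<beta> * a \<beta> \<gamma> + a \<beta> \<alpha> * a \<alpha> \<gamma> = a \<alpha> \<gamma> * a \<beta> \<gamma>)
       \<longrightarrow> (\<forall>i j k l. {i, j} \<noteq> {k, l} \<longrightarrow> dRm a i j k l = 0))"
proof (intro conjI allI impI)
  fix i j k l :: 'n
  show "dRm a i j k l = 0" if "i < j \<and> k < l \<and> i \<le> k \<and> distinct [i, j, k, l]"
    using that by (simp add: dRm_distinct)
  show "dRm a i j k l = 8 * (a i l * a l j + a l i * a i j) - 8 * a i j * a l j"
    if "i < k \<and> k = j \<and> j < l"
    using that dRm_jk[of i j l a] order.strict_trans[of i j l] by auto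
  show "dRm a i j k l = 8 * a i j * a k j - 8 * (a i k * a k j + a k i * a i j)"
    if "i < k \<and> k < l \<and> l = j"
    using that dRm_lj[of i k j a] order.strict_trans[of i k j] by auto
  show "dRm a i j k l = 8 * a l i * a j i - 8 * (a j l * a l i + a l j * a j i)"
    if "i < j \<and> k < l \<and> i = k \<and> j \<noteq> l"
    using that dRm_ik[of i j l a] by auto
  show "dRm a i j k l = 8 * ((a i j)^2 + (a j i)^2)
      - 8 * ((\<Sum>q\<in>UNIV - {i, j}. a q i * a q j) + 3 * a i i * a i j + 3 * a j j * a j i)"
    if "i < j \<and> i = k \<and> j = l"
    using that dRm_ijij[of i j a] by auto
qed (rule dRm_cond)

section \<open>The Ricci flow starting at the graph metric\<close>

text \<open>A solution of the Ricci flow on \<open>[0, T)\<close> near the origin, starting at the graph metric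
  of the cubic.\<close>

locale ricci_flow_graph =
  fixes a :: "'n::{finite,linorder} \<Rightarrow> 'n \<Rightarrow> real"
    and g :: "real \<Rightarrow> (real, 'n) vec \<Rightarrow> ((real, 'n) vec, 'n) vec"
    and U :: "(real, 'n) vec set" and S :: "(real \<times> (real, 'n) vec) set" and T :: real
  assumes T: "T > 0"
    and U: "open U" "0 \<in> U"
    and S: "open S" "{0..<T} \<times> U \<subseteq> S"
    and smooth: "\<And>i j. smooth_fun_on S (\<lambda>(t, x). g t x $ i $ j)"
    and ricci_flow: "\<And>t x i j. t \<in> {0..<T} \<Longrightarrow> x \<in> U \<Longrightarrow>
        ((\<lambda>s. g s x $ i $ j) has_real_derivative (- 2 * Ric g t x i j)) (at t within {0..<T})"
    and init: "\<And>x. x \<in> U \<Longrightarrow> g 0 x = graph_metric (cubic_f a) x"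
begin

definition gz :: "'n \<Rightarrow> 'n \<Rightarrow> real \<times> (real, 'n) vec \<Rightarrow> real" where
  "gz i j = (\<lambda>(t, x). g t x $ i $ j)"

lemma gz_apply: "gz i j (t, x) = g t x $ i $ j"
  by (simp add: gz_def)

definition metric_base :: "(real \<times> (real, 'n) vec \<Rightarrow> real) set" where
  "metric_base = {dir_derivs vs (gz i j) | vs i j. True}"

lemma closed_metric_base:
  assumes "V \<subseteq> S"
  shows "closed_base metric_base V"
  unfolding closed_base_def poly_line_derivs_def
proof (intro ballI conjI allI)
  fix b v assume "b \<in> metric_base"
  then obtain vs i j where b: "b = dir_derivs vs (gz i j)" unfolding metric_base_def by blast
  have sm: "smooth_fun_on S (gz i j)" using smooth unfolding gz_def .
  show "continuous_on V b"
    using sm assms unfolding smooth_fun_on_def b by (meson continuous_on_subset)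
  have "\<forall>z\<in>V. ((\<lambda>s. b (z + s *\<^sub>R v)) has_real_derivative dir_derivs (v # vs) (gz i j) z) (at 0)"
  proof
    fix z assume "z \<in> V"
    then have "z \<in> S" using assms by blast
    then have "(\<lambda>s. dir_derivs vs (gz i j) (z + s *\<^sub>R v)) differentiable at 0"
      using sm unfolding smooth_fun_on_def by blast
    then show "((\<lambda>s. b (z + s *\<^sub>R v)) has_real_derivative dir_derivs (v # vs) (gz i j) z) (at 0)"
      unfolding b by (simp add: dir_deriv_def DERIV_deriv_iff_real_differentiable)
  qed
  moreover have "dir_derivs (v # vs) (gz i j) \<in> polys metric_base"
    by (rule polys.pbase) (unfold metric_base_def, rule CollectI, rule exI[of _ "v # vs"], blast)
  ultimately show "\<exists>q\<in>polys metric_base. \<forall>z\<in>V. ((\<lambda>s. b (z + s *\<^sub>R v)) has_real_derivative q z) (at 0)"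
    by blast
qed

text \<open>Adjoining \<open>1 / det g\<close> on the open set \<open>S0\<close> where \<open>g\<close> is invertible (it contains the
  origin, where \<open>g = I\<close>) gives the space-time algebra \<open>st.Alg\<close>.\<close>

definition gm :: "real \<times> (real, 'n) vec \<Rightarrow> ((real, 'n) vec, 'n) vec" where
  "gm z = g (fst z) (snd z)"

lemma gm_entry_polys: "(\<lambda>z. gm z $ i $ j) \<in> polys metric_base"
proof -
  have "dir_derivs [] (gz i j) \<in> polys metric_base"
    by (rule polys.pbase) (unfold metric_base_def, rule CollectI, rule exI[of _ "[]"], blast)
  then have "gz i j \<in> polys metric_base" by simp
  moreover have "gz i j = (\<lambda>z. gm z $ i $ j)" by (auto simp: gz_def gm_def fun_eq_iff)
  ultimately show ?thesis by simp
qed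

definition S0 :: "(real \<times> (real, 'n) vec) set" where
  "S0 = S \<inter> {z. det (gm z) \<noteq> 0}"

lemma open_S0: "open S0"
proof -
  have "continuous_on S (\<lambda>z. det (gm z))"
    using polys_continuous[OF closed_metric_base det_polys[OF gm_entry_polys]] by blast
  then have "open ((\<lambda>z. det (gm z)) -` (- {0}) \<inter> S)"
    using S(1) continuous_on_open_vimage by blast
  moreover have "(\<lambda>z. det (gm z)) -` (- {0}) \<inter> S = S0" by (auto simp: S0_def)
  ultimately show ?thesis by simp
qed

lemma S0_subset: "S0 \<subseteq> S" by (auto simp: S0_def)

lemma g_initial_origin: "g 0 0 = mat 1"
  using init[OF U(2)] by (simp add: graph_metric_gmat gmat_0)

lemma origin_in_S0: "(0, 0) \<in> S0"
proof -
  have "(0, 0) \<in> S" using S(2) U(2) T by auto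
  then show ?thesis by (simp add: S0_def gm_def g_initial_origin)
qed

definition metric_base_inv :: "(real \<times> (real, 'n) vec \<Rightarrow> real) set" where
  "metric_base_inv = insert (\<lambda>z. 1 / det (gm z)) metric_base"

lemma closed_metric_base_inv: "closed_base metric_base_inv S0"
  unfolding metric_base_inv_def
  by (rule closed_base_inverse[OF closed_metric_base[OF S0_subset] det_polys[OF gm_entry_polys]]) (simp add: S0_def)

sublocale st: poly_algebra S0 metric_base_inv
  by unfold_locales (simp_all add: open_S0 closed_metric_base_inv)

lemma gz_dir_derivs_Alg[intro]: "dir_derivs vs (gz i j) \<in> st.Alg"
  by (rule st.Alg_base) (unfold metric_base_inv_def metric_base_def, blast)

lemma gz_Alg[intro]: "gz i j \<in> st.Alg"
  using gz_dir_derivs_Alg[of "[]" i j] by simp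

lemma dir_deriv_gz_Alg[intro]: "dir_deriv v (gz i j) \<in> st.Alg"
  using gz_dir_derivs_Alg[of "[v]" i j] by simp

definition ginvz :: "'n \<Rightarrow> 'n \<Rightarrow> real \<times> (real, 'n) vec \<Rightarrow> real" where
  "ginvz m l = (\<lambda>z. matrix_inv (gm z) $ m $ l)"

lemma ginvz_Alg[intro]: "ginvz m l \<in> st.Alg"
  unfolding ginvz_def
proof (rule st.matrix_inv_Alg)
  show "(\<lambda>z. gm z $ p $ q) \<in> st.Alg" for p q
  proof -
    have "gz p q = (\<lambda>z. gm z $ p $ q)" by (auto simp: gz_def gm_def fun_eq_iff)
    then show ?thesis using gz_Alg[of p q] by simp
  qed
  show "(\<lambda>z. 1 / det (gm z)) \<in> st.Alg" by (rule st.Alg_base) (simp add: metric_base_inv_def)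
  show "det (gm z) \<noteq> 0" if "z \<in> S0" for z using that by (simp add: S0_def)
qed

definition chr1z :: "'n \<Rightarrow> 'n \<Rightarrow> 'n \<Rightarrow> real \<times> (real, 'n) vec \<Rightarrow> real" where
  "chr1z j k l = (\<lambda>z. dir_deriv (0, axis j 1) (gz k l) z + dir_deriv (0, axis k 1) (gz j l) z - dir_deriv (0, axis l 1) (gz j k) z)"

lemma chr1z_Alg[intro]: "chr1z j k l \<in> st.Alg"
  unfolding chr1z_def by (intro st.Alg_add st.Alg_diff dir_deriv_gz_Alg)

definition chr2z :: "'n \<Rightarrow> 'n \<Rightarrow> 'n \<Rightarrow> real \<times> (real, 'n) vec \<Rightarrow> real" where
  "chr2z j k m = (\<lambda>z. 1 / 2 * (\<Sum>l\<in>UNIV. ginvz m l z * chr1z j k l z))"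

lemma chr2z_Alg[intro]: "chr2z j k m \<in> st.Alg"
  unfolding chr2z_def by (intro st.Alg_cmult st.Alg_sum st.Alg_mult ginvz_Alg chr1z_Alg) simp_all

lemma pdx_gz: "pdx i (\<lambda>y. g t y $ j $ l) y = dir_deriv (0, axis i 1) (gz j l) (t, y)"
  by (simp add: pdx_dd dir_deriv_slice gz_apply)

lemma Christoffel_z: "Christoffel g t y j k m = chr2z j k m (t, y)"
  by (simp add: Christoffel_def chr2z_def ginvz_def chr1z_def gm_def pdx_gz)

definition R31z :: "'n \<Rightarrow> 'n \<Rightarrow> 'n \<Rightarrow> 'n \<Rightarrow> real \<times> (real, 'n) vec \<Rightarrow> real" where
  "R31z i j k m = (\<lambda>z. dir_deriv (0, axis i 1) (chr2z j k m) z - dir_deriv (0, axis j 1) (chr2z i k m) z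
     + (\<Sum>p\<in>UNIV. chr2z j k p z * chr2z i p m z - chr2z i k p z * chr2z j p m z))"

lemma R31z_Alg[intro]: "R31z i j k m \<in> st.Alg"
  unfolding R31z_def by (intro st.Alg_add st.Alg_diff st.Alg_sum st.Alg_mult st.Alg_dir_deriv chr2z_Alg) simp_all

lemma Riem31_z: "Riem31 g t y i j k m = R31z i j k m (t, y)"
proof -
  have "pdx i (\<lambda>y. Christoffel g t y j k m) y = dir_deriv (0, axis i 1) (chr2z j k m) (t, y)" for i j k m
    by (simp add: pdx_dd dir_deriv_slice Christoffel_z)
  then show ?thesis by (simp add: Riem31_def R31z_def Christoffel_z)
qed

definition Rmz :: "'n \<Rightarrow> 'n \<Rightarrow> 'n \<Rightarrow> 'n \<Rightarrow> real \<times> (real, 'n) vec \<Rightarrow> real" where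
  "Rmz i j k l = (\<lambda>z. \<Sum>m\<in>UNIV. R31z i j k m z * gz m l z)"

lemma Rmz_Alg[intro]: "Rmz i j k l \<in> st.Alg"
  unfolding Rmz_def by (intro st.Alg_sum st.Alg_mult R31z_Alg gz_Alg) simp_all

lemma Rm_z: "Rm g t y i j k l = Rmz i j k l (t, y)"
  by (simp add: Rm_def Rmz_def Riem31_z gz_apply)

lemma g_initial: "y \<in> U \<Longrightarrow> g 0 y = graph_family a 0 y"
  by (simp add: init graph_metric_gmat graph_family_def)

lemma Christoffel_initial: "y \<in> U \<Longrightarrow> Christoffel g 0 y j k m = Christoffel (graph_family a) 0 y j k m"
proof -
  assume y: "y \<in> U"
  have "pdx i (\<lambda>y. g 0 y $ j $ l) y = pdx i (\<lambda>y. graph_family a 0 y $ j $ l) y" for i j l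
    unfolding pdx_dd by (rule dir_deriv_cong_open[OF U(1) y]) (simp add: g_initial)
  then show ?thesis by (simp add: Christoffel_def g_initial[OF y])
qed

lemma Riem31_initial: "y \<in> U \<Longrightarrow> Riem31 g 0 y i j k m = Riem31 (graph_family a) 0 y i j k m"
proof -
  assume y: "y \<in> U"
  have "pdx i (\<lambda>y. Christoffel g 0 y j k m) y = pdx i (\<lambda>y. Christoffel (graph_family a) 0 y j k m) y" for i j k m
    unfolding pdx_dd by (rule dir_deriv_cong_open[OF U(1) y]) (simp add: Christoffel_initial)
  then show ?thesis by (simp add: Riem31_def Christoffel_initial[OF y])
qed

lemma Ric_initial: "y \<in> U \<Longrightarrow> Ric g 0 y k l = ric_graph a k l y"
  by (simp add: Ric_def ric_graph_def Riem31_initial)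

lemma Rm_initial_origin: "Rm g 0 0 i j k l = 0"
  by (simp add: Rm_def Riem31_initial[OF U(2)] Riem31_graph_family_0)

lemma gz_initial: "y \<in> U \<Longrightarrow> gz k l (0, y) = gentry a k l y"
  by (simp add: gz_apply gentry_def g_initial graph_family_def)

lemma gz_origin: "gz m l (0, 0) = (if m = l then 1 else 0)"
  by (simp add: gz_apply g_initial_origin mat_def)

lemma dir_deriv_gz_initial: "y \<in> U \<Longrightarrow> dir_deriv (0, axis j 1) (gz k l) (0, y) = dir_deriv (ee j) (gentry a k l) y"
  unfolding dir_deriv_slice by (rule dir_deriv_cong_open[OF U(1)]) (simp_all add: gz_initial)

lemma dir_deriv_gz_origin: "dir_deriv (0, axis j 1) (gz k l) (0, 0) = 0"
  using dir_deriv_gz_initial[OF U(2)] dir_deriv_gentry_0 by simp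

lemma dir_deriv2_gz_origin: "dir_deriv (0, axis i 1) (dir_deriv (0, axis j 1) (gz k l)) (0, 0) = 0"
proof -
  have "dir_deriv (0, axis i 1) (dir_deriv (0, axis j 1) (gz k l)) (0, 0) =
      dir_deriv (ee i) (dir_deriv (ee j) (gentry a k l)) 0"
    unfolding dir_deriv_slice by (rule dir_deriv_cong_open[OF U(1) U(2)]) (simp add: dir_deriv_gz_initial[unfolded dir_deriv_slice])
  then show ?thesis using dir_deriv2_gentry_0 by simp
qed

lemma chr1z_origin: "chr1z j k l (0, 0) = 0"
  by (simp add: chr1z_def dir_deriv_gz_origin)

lemma dir_deriv_chr1z_origin: "dir_deriv (0, axis i 1) (chr1z j k l) (0, 0) = 0"
  unfolding chr1z_def
  by (simp add: st.dir_deriv_add st.dir_deriv_diff dir_deriv_gz_Alg st.Alg_add origin_in_S0 dir_deriv2_gz_origin)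

lemma ginvz_initial: "y \<in> U \<Longrightarrow> ginvz m l (0, y) = ginv a m l y"
  by (simp add: ginvz_def ginv_def gm_def g_initial graph_family_def)

lemma ginvz_origin: "ginvz m l (0, 0) = (if m = l then 1 else 0)"
  by (simp add: ginvz_initial[OF U(2)] ginv_0)

lemma dir_deriv_ginvz_origin: "dir_deriv (0, axis i 1) (ginvz m l) (0, 0) = 0"
proof -
  have "dir_deriv (0, axis i 1) (ginvz m l) (0, 0) = dir_deriv (ee i) (ginv a m l) 0"
    unfolding dir_deriv_slice by (rule dir_deriv_cong_open[OF U(1) U(2)]) (simp add: ginvz_initial)
  then show ?thesis using dir_deriv_ginv_0 by simp
qed

lemma chr2z_origin: "chr2z j k m (0, 0) = 0"
  by (simp add: chr2z_def chr1z_origin)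

lemma R31z_origin: "R31z i j k m (0, 0) = 0"
  using Riem31_z[of 0 0 i j k m] by (simp add: Riem31_initial[OF U(2)] Riem31_graph_family_0)

lemma dt_gz_initial:
  assumes y: "y \<in> U"
  shows "dir_deriv (1, 0) (gz k l) (0, y) = - 2 * ric_graph a k l y"
proof -
  have zS: "(0, y) \<in> S" using S(2) y T by auto
  have sm: "smooth_fun_on S (gz k l)" using smooth unfolding gz_def .
  then have "(\<lambda>s. dir_derivs [] (gz k l) ((0, y) + s *\<^sub>R (1, 0))) differentiable at 0"
    using zS unfolding smooth_fun_on_def by blast
  then have d1: "((\<lambda>s. g s y $ k $ l) has_real_derivative dir_deriv (1, 0) (gz k l) (0, y)) (at 0)"
    by (simp add: dir_deriv_def DERIV_deriv_iff_real_differentiable gz_apply)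
  have d2: "((\<lambda>s. g s y $ k $ l) has_real_derivative (- 2 * Ric g 0 y k l)) (at 0 within {0..<T})"
    using ricci_flow[OF _ y] T by simp
  show ?thesis using deriv_within_unique[OF d1 d2 T] Ric_initial[OF y] by simp
qed

lemma dt_hess_gz_eq:
  "dir_deriv (0, axis p 1) (dir_deriv (0, axis q 1) (dir_deriv (1, 0) (gz x y))) (0, 0) = - 2 * ric_2 a x y p q"
proof -
  have inner: "dir_deriv (0, axis q 1) (dir_deriv (1, 0) (gz x y)) (0, y') = - 2 * dir_deriv (ee q) (ric_graph a x y) y'"
    if y': "y' \<in> U" for y'
  proof -
    have "dir_deriv (0, axis q 1) (dir_deriv (1, 0) (gz x y)) (0, y') = dir_deriv (ee q) (\<lambda>y''. - 2 * ric_graph a x y y'') y'"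
      unfolding dir_deriv_slice by (rule dir_deriv_cong_open[OF U(1) y']) (simp add: dt_gz_initial del: mult_minus_left)
    also have "\<dots> = - 2 * dir_deriv (ee q) (ric_graph a x y) y'"
      by (rule sp.dir_deriv_cmult) auto
    finally show ?thesis .
  qed
  have "dir_deriv (0, axis p 1) (dir_deriv (0, axis q 1) (dir_deriv (1, 0) (gz x y))) (0, 0) =
      dir_deriv (ee p) (\<lambda>y'. - 2 * dir_deriv (ee q) (ric_graph a x y) y') 0"
    unfolding dir_deriv_slice by (rule dir_deriv_cong_open[OF U(1) U(2)]) (simp add: inner[unfolded dir_deriv_slice] del: mult_minus_left)
  also have "\<dots> = - 2 * dir_deriv (ee p) (dir_deriv (ee q) (ric_graph a x y)) 0"
    by (rule sp.dir_deriv_cmult) auto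
  also have "\<dots> = - 2 * ric_2 a x y p q"
    using ric_graph_second_deriv[of p q a x y] by simp
  finally show ?thesis .
qed

text \<open>Time derivatives of the Christoffel symbols (mixed derivatives commute in the algebra).\<close>

lemma dt_chr1z: "z \<in> S0 \<Longrightarrow> dir_deriv (1, 0) (chr1z j k l) z =
   dir_deriv (0, axis j 1) (dir_deriv (1, 0) (gz k l)) z + dir_deriv (0, axis k 1) (dir_deriv (1, 0) (gz j l)) z
   - dir_deriv (0, axis l 1) (dir_deriv (1, 0) (gz j k)) z"
  unfolding chr1z_def
  by (simp add: st.dir_deriv_add st.dir_deriv_diff dir_deriv_gz_Alg st.Alg_add st.dir_deriv_commute[OF gz_Alg])

lemma dt_chr2z: "z \<in> S0 \<Longrightarrow> dir_deriv (1, 0) (chr2z j k m) z =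
   1 / 2 * (\<Sum>l\<in>UNIV. dir_deriv (1, 0) (ginvz m l) z * chr1z j k l z + ginvz m l z * dir_deriv (1, 0) (chr1z j k l) z)"
proof -
  assume z: "z \<in> S0"
  have s: "(\<lambda>z. \<Sum>l\<in>UNIV. ginvz m l z * chr1z j k l z) \<in> st.Alg" by (intro st.Alg_sum st.Alg_mult) auto
  show ?thesis unfolding chr2z_def st.dir_deriv_cmult[OF s z]
    by (simp add: st.dir_deriv_sum[OF _ _ z] st.Alg_mult ginvz_Alg chr1z_Alg st.dir_deriv_mult[OF _ _ z])
qed

definition dt_hess_gz :: "'n \<Rightarrow> 'n \<Rightarrow> 'n \<Rightarrow> 'n \<Rightarrow> real" where
  "dt_hess_gz p q x y = dir_deriv (0, axis p 1) (dir_deriv (0, axis q 1) (dir_deriv (1, 0) (gz x y))) (0, 0)"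

lemma dx_dt_chr1z_origin: "dir_deriv (0, axis i 1) (dir_deriv (1, 0) (chr1z j k l)) (0, 0) = dt_hess_gz i j k l + dt_hess_gz i k j l - dt_hess_gz i l j k"
proof -
  have "dir_deriv (0, axis i 1) (dir_deriv (1, 0) (chr1z j k l)) (0, 0) =
     dir_deriv (0, axis i 1) (\<lambda>z. dir_deriv (0, axis j 1) (dir_deriv (1, 0) (gz k l)) z + dir_deriv (0, axis k 1) (dir_deriv (1, 0) (gz j l)) z
   - dir_deriv (0, axis l 1) (dir_deriv (1, 0) (gz j k)) z) (0, 0)"
    by (rule dir_deriv_cong_open[OF open_S0 origin_in_S0]) (simp add: dt_chr1z)
  also have "\<dots> = dt_hess_gz i j k l + dt_hess_gz i k j l - dt_hess_gz i l j k"
    unfolding dt_hess_gz_def using origin_in_S0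
    by (simp add: st.dir_deriv_add st.dir_deriv_diff st.Alg_dir_deriv dir_deriv_gz_Alg st.Alg_add)
  finally show ?thesis .
qed

lemma dt_dx_chr2z_origin: "dir_deriv (1, 0) (dir_deriv (0, axis i 1) (chr2z j k m)) (0, 0) = 1 / 2 * (dt_hess_gz i j k m + dt_hess_gz i k j m - dt_hess_gz i m j k)"
proof -
  have "dir_deriv (1, 0) (dir_deriv (0, axis i 1) (chr2z j k m)) (0, 0) =
      dir_deriv (0, axis i 1) (dir_deriv (1, 0) (chr2z j k m)) (0, 0)"
    by (rule st.dir_deriv_commute[OF chr2z_Alg origin_in_S0])
  also have "\<dots> = dir_deriv (0, axis i 1)
      (\<lambda>z. 1 / 2 * (\<Sum>l\<in>UNIV. dir_deriv (1, 0) (ginvz m l) z * chr1z j k l z + ginvz m l z * dir_deriv (1, 0) (chr1z j k l) z)) (0, 0)"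
    by (rule dir_deriv_cong_open[OF open_S0 origin_in_S0]) (simp add: dt_chr2z)
  also have "\<dots> = 1 / 2 * (\<Sum>l\<in>UNIV.
       (dir_deriv (0, axis i 1) (dir_deriv (1, 0) (ginvz m l)) (0, 0) * chr1z j k l (0, 0)
        + dir_deriv (1, 0) (ginvz m l) (0, 0) * dir_deriv (0, axis i 1) (chr1z j k l) (0, 0))
     + (dir_deriv (0, axis i 1) (ginvz m l) (0, 0) * dir_deriv (1, 0) (chr1z j k l) (0, 0)
        + ginvz m l (0, 0) * dir_deriv (0, axis i 1) (dir_deriv (1, 0) (chr1z j k l)) (0, 0)))"
  proof -
    have s: "(\<lambda>z. \<Sum>l\<in>UNIV. dir_deriv (1, 0) (ginvz m l) z * chr1z j k l z + ginvz m l z * dir_deriv (1, 0) (chr1z j k l) z) \<in> st.Alg"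
      by (intro st.Alg_sum st.Alg_add st.Alg_mult st.Alg_dir_deriv ginvz_Alg chr1z_Alg) simp
    show ?thesis unfolding st.dir_deriv_cmult[OF s origin_in_S0]
      by (simp add: st.dir_deriv_sum[OF _ _ origin_in_S0] st.dir_deriv_add[OF _ _ origin_in_S0] st.dir_deriv_mult[OF _ _ origin_in_S0]
          st.Alg_add st.Alg_mult st.Alg_dir_deriv ginvz_Alg chr1z_Alg)
  qed
  also have "\<dots> = 1 / 2 * dir_deriv (0, axis i 1) (dir_deriv (1, 0) (chr1z j k m)) (0, 0)"
    unfolding chr1z_origin dir_deriv_chr1z_origin dir_deriv_ginvz_origin ginvz_origin
    by (simp only: mult_zero_right mult_zero_left add_0_left add_0_right sum_delta_mult)
  finally show ?thesis unfolding dx_dt_chr1z_origin .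
qed

text \<open>Differentiating the curvature in time at the origin: the \<open>\<Gamma>\<Gamma>\<close> terms drop out since \<open>\<Gamma> = 0\<close>
  there, and lowering the index with \<open>g = I\<close> changes nothing.\<close>

lemma dt_R31z_origin: "dir_deriv (1, 0) (R31z i j k l) (0, 0) =
   1 / 2 * (dt_hess_gz i j k l + dt_hess_gz i k j l - dt_hess_gz i l j k) - 1 / 2 * (dt_hess_gz j i k l + dt_hess_gz j k i l - dt_hess_gz j l i k)"
proof -
  have linear_terms_Alg: "(\<lambda>z. dir_deriv (0, axis i 1) (chr2z j k l) z - dir_deriv (0, axis j 1) (chr2z i k l) z) \<in> st.Alg"
    by (intro st.Alg_diff st.Alg_dir_deriv chr2z_Alg)
  have quadratic_terms_Alg: "(\<lambda>z. \<Sum>p\<in>UNIV. chr2z j k p z * chr2z i p l z - chr2z i k p z * chr2z j p l z) \<in> st.Alg"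
    by (intro st.Alg_sum st.Alg_diff st.Alg_mult chr2z_Alg) simp
  have "dir_deriv (1, 0) (R31z i j k l) (0, 0) =
     dir_deriv (1, 0) (dir_deriv (0, axis i 1) (chr2z j k l)) (0, 0) - dir_deriv (1, 0) (dir_deriv (0, axis j 1) (chr2z i k l)) (0, 0)
     + (\<Sum>p\<in>UNIV. (dir_deriv (1, 0) (chr2z j k p) (0, 0) * chr2z i p l (0, 0) + chr2z j k p (0, 0) * dir_deriv (1, 0) (chr2z i p l) (0, 0))
        - (dir_deriv (1, 0) (chr2z i k p) (0, 0) * chr2z j p l (0, 0) + chr2z i k p (0, 0) * dir_deriv (1, 0) (chr2z j p l) (0, 0)))"
    unfolding R31z_def st.dir_deriv_add[OF linear_terms_Alg quadratic_terms_Alg origin_in_S0]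
    by (simp add: st.dir_deriv_diff[OF _ _ origin_in_S0] st.dir_deriv_sum[OF _ _ origin_in_S0] st.dir_deriv_mult[OF _ _ origin_in_S0] st.Alg_dir_deriv
        st.Alg_mult st.Alg_diff chr2z_Alg)
  then show ?thesis by (simp add: chr2z_origin dt_dx_chr2z_origin)
qed

lemma dt_Rmz_origin: "dir_deriv (1, 0) (Rmz i j k l) (0, 0) = dir_deriv (1, 0) (R31z i j k l) (0, 0)"
proof -
  have "dir_deriv (1, 0) (Rmz i j k l) (0, 0) =
      (\<Sum>m\<in>UNIV. dir_deriv (1, 0) (R31z i j k m) (0, 0) * gz m l (0, 0) + R31z i j k m (0, 0) * dir_deriv (1, 0) (gz m l) (0, 0))"
    unfolding Rmz_def by (simp add: st.dir_deriv_sum[OF _ _ origin_in_S0] st.dir_deriv_mult[OF _ _ origin_in_S0] st.Alg_mult R31z_Alg gz_Alg)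
  also have "\<dots> = (\<Sum>m\<in>UNIV. dir_deriv (1, 0) (R31z i j k m) (0, 0) * (if m = l then 1 else 0))"
    by (simp add: gz_origin R31z_origin)
  also have "\<dots> = dir_deriv (1, 0) (R31z i j k l) (0, 0)" by (rule sum_mult_delta)
  finally show ?thesis .
qed

lemma Rm_time_deriv: "((\<lambda>t. Rm g t 0 i j k l) has_real_derivative dRm a i j k l) (at 0)"
proof -
  have d: "((\<lambda>s. Rmz i j k l ((0, 0) + s *\<^sub>R (1, 0))) has_real_derivative dir_deriv (1, 0) (Rmz i j k l) (0, 0)) (at 0)"
    by (rule st.Alg_line_deriv[OF Rmz_Alg origin_in_S0])
  have "dir_deriv (1, 0) (Rmz i j k l) (0, 0) =
      1 / 2 * (dt_hess_gz i j k l + dt_hess_gz i k j l - dt_hess_gz i l j k) - 1 / 2 * (dt_hess_gz j i k l + dt_hess_gz j k i l - dt_hess_gz j l i k)"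
    by (simp only: dt_Rmz_origin dt_R31z_origin)
  also have "\<dots> = 1 / 2 * (- 2 * ric_2 a k l i j + - 2 * ric_2 a j l i k - - 2 * ric_2 a j k i l)
      - 1 / 2 * (- 2 * ric_2 a k l j i + - 2 * ric_2 a i l j k - - 2 * ric_2 a i k j l)"
    by (simp only: dt_hess_gz_def dt_hess_gz_eq)
  also have "\<dots> = dRm a i j k l"
    unfolding dRm_def ric_2_sym[of a k l i j] by (simp add: algebra_simps)
  finally have v: "dir_deriv (1, 0) (Rmz i j k l) (0, 0) = dRm a i j k l" .
  have e: "(\<lambda>s. Rmz i j k l ((0, 0) + s *\<^sub>R (1, 0))) = (\<lambda>t. Rm g t 0 i j k l)"
  proof
    fix s :: real
    have "(0::real, 0::(real, 'n) vec) + s *\<^sub>R (1, 0) = (s, 0)" by simp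
    then show "Rmz i j k l ((0, 0) + s *\<^sub>R (1, 0)) = Rm g s 0 i j k l" by (simp only: Rm_z)
  qed
  show ?thesis using d unfolding v e .
qed

lemma Rm_time_deriv_right_iff:
  "((\<lambda>t. Rm g t 0 i j k l) has_real_derivative v) (at_right 0) \<longleftrightarrow> dRm a i j k l = v"
  using has_field_derivative_unique[OF has_field_derivative_at_within[OF Rm_time_deriv] _
      trivial_limit_at_right_real] has_field_derivative_at_within[OF Rm_time_deriv] by auto

end

theorem mainTheorem1:
  fixes a :: "'n::{finite,linorder} \<Rightarrow> 'n \<Rightarrow> real"
    and g :: "real \<Rightarrow> (real, 'n) vec \<Rightarrow> ((real, 'n) vec, 'n) vec"
    and U :: "(real, 'n) vec set" and S :: "(real \<times> (real, 'n) vec) set" and T :: real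
  assumes n2: "CARD('n) \<ge> 2"
    and T: "T > 0"
    and U: "open U" "0 \<in> U"
    and S: "open S" "{0..<T} \<times> U \<subseteq> S"
    and smooth: "\<And>i j. smooth_fun_on S (\<lambda>(t, x). g t x $ i $ j)"
    and metric: "\<And>t x. t \<in> {0..<T} \<Longrightarrow> x \<in> U \<Longrightarrow>
        transpose (g t x) = g t x \<and> (\<forall>v. v \<noteq> 0 \<longrightarrow> v \<bullet> (g t x *v v) > 0)"
    and ricci_flow: "\<And>t x i j. t \<in> {0..<T} \<Longrightarrow> x \<in> U \<Longrightarrow>
        ((\<lambda>s. g s x $ i $ j) has_real_derivative (- 2 * Ric g t x i j)) (at t within {0..<T})"
    and init: "\<And>x. x \<in> U \<Longrightarrow> g 0 x = graph_metric (cubic_f a) x"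
  shows "(\<forall>i j k l. Rm g 0 0 i j k l = 0)
    \<and> (\<forall>i j k l. i < j \<and> k < l \<and> i \<le> k \<and> distinct [i, j, k, l] \<longrightarrow>
          ((\<lambda>t. Rm g t 0 i j k l) has_real_derivative 0) (at_right 0))
    \<and> (\<forall>i j k l. i < k \<and> k = j \<and> j < l \<longrightarrow>
          ((\<lambda>t. Rm g t 0 i j k l) has_real_derivative
             (8 * (a i l * a l j + a l i * a i j) - 8 * a i j * a l j)) (at_right 0))
    \<and> (\<forall>i j k l. i < k \<and> k < l \<and> l = j \<longrightarrow>
          ((\<lambda>t. Rm g t 0 i j k l) has_real_derivative
             (8 * a i j * a k j - 8 * (a i k * a k j + a k i * a i j))) (at_right 0))
    \<and> (\<forall>i j k l. i < j \<and> k < l \<and> i = k \<and> j \<noteq> l \<longrightarrow>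
          ((\<lambda>t. Rm g t 0 i j k l) has_real_derivative
             (8 * a l i * a j i - 8 * (a j l * a l i + a l j * a j i))) (at_right 0))
    \<and> (\<forall>i j k l. i < j \<and> i = k \<and> j = l \<longrightarrow>
          ((\<lambda>t. Rm g t 0 i j k l) has_real_derivative
             (8 * ((a i j)^2 + (a j i)^2)
              - 8 * ((\<Sum>q\<in>UNIV - {i, j}. a q i * a q j) + 3 * a i i * a i j + 3 * a j j * a j i)))
           (at_right 0))
    \<and> ((\<forall>\<alpha> \<beta> \<gamma>. distinct [\<alpha>, \<beta>, \<gamma>] \<longrightarrow>
           a \<alpha> \<beta> * a \<beta> \<gamma> + a \<beta> \<alpha> * a \<alpha> \<gamma> = a \<alpha> \<gamma> * a \<beta> \<gamma>)
       \<longrightarrow> (\<forall>i j k l. {i, j} \<noteq> {k, l} \<longrightarrow>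
             ((\<lambda>t. Rm g t 0 i j k l) has_real_derivative 0) (at_right 0)))"
proof -
  interpret ricci_flow_graph a g U S T
    by unfold_locales (use T U S smooth ricci_flow init in auto)
  show ?thesis
    unfolding Rm_time_deriv_right_iff using Rm_initial_origin dRm_cases[of a] by blast
qed

end
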